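(* Let $\mathcal{X}$ be a measurable space, $k:\mathcal{X}\times\mathcal{X}\to\mathbb{R}$ a measurable reproducing kernel with $|k(x,y)|\le1$ for all $x,y$, and $\{\mathbb{P}_\theta:\theta\in\Theta\}$ a family of Borel probability measures on $\mathcal{X}$. Let $\mathbb{P}^*_0$ be a Borel probability measure with $\inf_{\theta\in\Theta}\mathrm{MMD}(\mathbb{P}_\theta,\mathbb{P}^*_0)=0$. Fix $\alpha>0$, an integer $T\ge1$ and a Borel probability measure $\mathbb{F}$. For each $n$, let $x_1,\dots,x_n$ be i.i.d. $\mathbb{P}^*_0$ and let $\nu_n$ be the approximate posterior defined in the context. Then for any sequence of positive reals $M_n\to+\infty$ with $M_n n^{-1/2}\to0$, \[ \nu_n\Big(\mathbb{P}:\ \mathrm{MMD}(\mathbb{P}^*_0,\mathbb{P}_{\theta^*(\mathbb{P})})>\frac{M_n}{n^{1/2}}\Big)\longrightarrow0\quad(n\to\infty), \] where the convergence is in $L^1$, i.e. the expectation of the left-hand side with respect to $x_{1:n}\overset{\text{iid}}{\sim}\mathbb{P}^*_0$ tends to $0$.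
   Context: For a Borel probability measure $\mathbb{P}$ on $\mathcal{X}$, $\mu_{\mathbb{P}}=\int k(x,\cdot)\,\mathbb{P}(dx)$ in the RKHS $\mathcal{H}_k$ of $k$, and $\mathrm{MMD}(\mathbb{P},\mathbb{Q})=\|\mu_{\mathbb{P}}-\mu_{\mathbb{Q}}\|_{\mathcal{H}_k}$. $\theta^*(\mathbb{P})$ denotes a minimiser in $\arg\inf_{\theta\in\Theta}\mathrm{MMD}^2(\mathbb{P},\mathbb{P}_\theta)$ (assumed to exist and chosen measurably). Given data $x_{1:n}$, $\nu_n$ is the law of the random measure $\mathbb{P}=\sum_{i=1}^n w_i\delta_{x_i}+\sum_{k=1}^T\tilde w_k\delta_{\tilde x_k}$ with $\tilde x_{1:T}$ i.i.d. $\mathbb{F}$, independent of $(w_1,\dots,w_n,\tilde w_1,\dots,\tilde w_T)\sim\mathrm{Dirichlet}(1,\dots,1,\tfrac{\alpha}{T},\dots,\tfrac{\alpha}{T})$ ($n$ ones, $T$ copies of $\alpha/T$). The quantity $\nu_n(\cdot)$ depends on the random data. *)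

theory Defs
  imports "HOL-Probability.Probability"
begin

definition pd_kernel :: "'a measure \<Rightarrow> ('a \<Rightarrow> 'a \<Rightarrow> real) \<Rightarrow> bool" where
  "pd_kernel M k \<longleftrightarrow>
     (\<forall>x\<in>space M. \<forall>y\<in>space M. k x y = k y x) \<and>
     (\<forall>(m::nat) (xs::nat \<Rightarrow> 'a) (c::nat \<Rightarrow> real). (\<forall>i<m. xs i \<in> space M) \<longrightarrow>
        (\<Sum>i<m. \<Sum>j<m. c i * c j * k (xs i) (xs j)) \<ge> 0)"

text \<open>MMD = RKHS norm of the difference of kernel mean embeddings, written out
  via the reproducing property:
  norm of mu_P - mu_Q squared = EE k(X,X') - 2 EE k(X,Y) + EE k(Y,Y').\<close>
definition mmd :: "('a \<Rightarrow> 'a \<Rightarrow> real) \<Rightarrow> 'a measure \<Rightarrow> 'a measure \<Rightarrow> real" where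
  "mmd k P Q = sqrt ((LINT x|P. LINT y|P. k x y) - 2 * (LINT x|P. LINT y|Q. k x y)
                     + (LINT x|Q. LINT y|Q. k x y))"

definition gamma_density :: "real \<Rightarrow> real \<Rightarrow> real" where
  "gamma_density a x = (if x > 0 then x powr (a - 1) * exp (- x) / Gamma a else 0)"

text \<open>Normalisation onto the simplex (the fallback branch only occurs on a null set).\<close>
definition simplex_normalize :: "nat \<Rightarrow> (nat \<Rightarrow> real) \<Rightarrow> nat \<Rightarrow> real" where
  "simplex_normalize m g =
     (if (\<forall>j<m. g j \<ge> 0) \<and> (\<Sum>i<m. g i) > 0
      then (\<lambda>j\<in>{..<m}. g j / (\<Sum>i<m. g i))
      else (\<lambda>j\<in>{..<m}. 1 / real m))"

definition dirichlet :: "nat \<Rightarrow> (nat \<Rightarrow> real) \<Rightarrow> (nat \<Rightarrow> real) measure" where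
  "dirichlet m a =
     distr (PiM {..<m} (\<lambda>j. density lborel (gamma_density (a j))))
           (PiM {..<m} (\<lambda>_. borel)) (simplex_normalize m)"

definition weighted_dirac :: "'a measure \<Rightarrow> nat \<Rightarrow> (nat \<Rightarrow> 'a) \<Rightarrow> (nat \<Rightarrow> real) \<Rightarrow> 'a measure" where
  "weighted_dirac M m y w =
     measure_of (space M) (sets M) (\<lambda>A. \<Sum>j<m. ennreal (w j) * indicator A (y j))"

text \<open>nu_n given data x_{1:n} (indices 0..n-1): law of
  sum_i w_i delta_{x_i} + sum_k w~_k delta_{x~_k}, with
  (w,w~) ~ Dirichlet(1,...,1,alpha/T,...,alpha/T) independent of x~_{1:T} iid F.\<close>
definition approx_posterior ::
  "'a measure \<Rightarrow> 'a measure \<Rightarrow> real \<Rightarrow> nat \<Rightarrow> nat \<Rightarrow> (nat \<Rightarrow> 'a) \<Rightarrow> 'a measure measure" where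
  "approx_posterior M F \<alpha> T n x =
     distr (dirichlet (n + T) (\<lambda>j. if j < n then 1 else \<alpha> / real T) \<Otimes>\<^sub>M PiM {..<T} (\<lambda>_. F))
           (prob_algebra M)
           (\<lambda>(w, xt). weighted_dirac M (n + T) (\<lambda>j. if j < n then x j else xt (j - n)) w)"

end

theory Submission
  imports Defs
begin

text \<open>Write \<open>P\<^bsub>\<theta>*(P)\<^esub>\<close> for the model point closest to \<open>P\<close> in MMD. The MMD is the seminorm of a
  positive semidefinite form on measures, so it satisfies the triangle inequality, and
  well-specification gives \<open>MMD(P0, P\<^bsub>\<theta>*(P)\<^esub>) \<le> 2 MMD(P0, P)\<close>. It therefore suffices to bound
  the posterior mass of \<open>{P. MMD(P0, P) > r}\<close> for \<open>r = M\<^sub>n / (2 \<surd>n)\<close>.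

  Realise the Dirichlet weights as normalised independent Gamma variables \<open>g\<close>. For
  \<open>P = \<Sum>j. w j \<delta>(y j)\<close>, \<open>MMD(P0, P)\<^sup>2 = \<Sum>i j. w i w j h(y i, y j)\<close> with the centred kernel \<open>h\<close>.
  Outside the event \<open>\<Sum>i<n. g i < n / 2\<close>, which has probability at most \<open>4 / n\<close> by Chebyshev,
  the normaliser is at least \<open>n / 2\<close>, and Markov's inequality bounds the mass by
  \<open>4 / (n\<^sup>2 r\<^sup>2)\<close> times \<open>E (\<Sum>i j. g i g j h(y i, y j))\<close>. Averaging over the data kills the terms
  with two distinct observations, because \<open>h\<close> has mean zero in each argument; the \<open>O(n)\<close>
  remaining terms are bounded, so the expected mass is \<open>O(1 / n + 1 / M\<^sub>n\<^sup>2)\<close>.\<close>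

section \<open>Integrals over finite products\<close>

lemma prod_two_factors:
  fixes \<phi> \<psi> :: "'a \<Rightarrow> 'b::comm_monoid_mult"
  assumes "finite I" "i \<in> I" "j \<in> I" "i \<noteq> j"
  shows "(\<Prod>l\<in>I. (if l = i then \<phi> else if l = j then \<psi> else (\<lambda>_. 1)) (\<omega> l)) = \<phi> (\<omega> i) * \<psi> (\<omega> j)"
proof -
  have "(\<Prod>l\<in>I. (if l = i then \<phi> else if l = j then \<psi> else (\<lambda>_. 1)) (\<omega> l))
      = (\<Prod>l\<in>{i, j}. (if l = i then \<phi> else if l = j then \<psi> else (\<lambda>_. 1)) (\<omega> l))"
    using assms by (intro prod.mono_neutral_right) auto
  then show ?thesis using assms by simp
qed

context product_prob_space
begin

lemma integral_PiM_component:
  fixes f :: "'a \<Rightarrow> real"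
  assumes "i \<in> I" "f \<in> borel_measurable (M i)"
  shows "(\<integral>\<omega>. f (\<omega> i) \<partial>PiM I M) = integral\<^sup>L (M i) f"
proof -
  have "(\<integral>\<omega>. f (\<omega> i) \<partial>PiM I M) = integral\<^sup>L (distr (PiM I M) (M i) (\<lambda>\<omega>. \<omega> i)) f"
    by (rule integral_distr[symmetric]) (auto intro: measurable_component_singleton assms)
  then show ?thesis using PiM_component[OF assms(1)] by simp
qed

lemma integrable_PiM_component:
  fixes f :: "'a \<Rightarrow> real"
  assumes "i \<in> I" "integrable (M i) f"
  shows "integrable (PiM I M) (\<lambda>\<omega>. f (\<omega> i))"
proof -
  have "integrable (distr (PiM I M) (M i) (\<lambda>\<omega>. \<omega> i)) f"
    using PiM_component[OF assms(1)] assms(2) by simp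
  then show ?thesis
    by (subst (asm) integrable_distr_eq)
      (auto intro: measurable_component_singleton assms borel_measurable_integrable)
qed

lemma integrable_PiM_two_components:
  fixes \<phi> \<psi> :: "'a \<Rightarrow> real"
  assumes "finite I" "i \<in> I" "j \<in> I" "i \<noteq> j" "integrable (M i) \<phi>" "integrable (M j) \<psi>"
  shows "integrable (PiM I M) (\<lambda>\<omega>. \<phi> (\<omega> i) * \<psi> (\<omega> j))"
proof -
  have "integrable (PiM I M)
      (\<lambda>\<omega>. \<Prod>l\<in>I. (if l = i then \<phi> else if l = j then \<psi> else (\<lambda>_. 1)) (\<omega> l))"
    using assms by (intro product_integrable_prod) auto
  then show ?thesis using prod_two_factors[OF assms(1-4), where \<phi>=\<phi> and \<psi>=\<psi>] by simp
qed

lemma integral_PiM_two_components: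
  fixes \<phi> \<psi> :: "'a \<Rightarrow> real"
  assumes "finite I" "i \<in> I" "j \<in> I" "i \<noteq> j" "integrable (M i) \<phi>" "integrable (M j) \<psi>"
  shows "(\<integral>\<omega>. \<phi> (\<omega> i) * \<psi> (\<omega> j) \<partial>PiM I M) = integral\<^sup>L (M i) \<phi> * integral\<^sup>L (M j) \<psi>"
proof -
  let ?g = "\<lambda>l. if l = i then \<phi> else if l = j then \<psi> else (\<lambda>_. 1)"
  have "(\<integral>\<omega>. (\<Prod>l\<in>I. ?g l (\<omega> l)) \<partial>PiM I M) = (\<Prod>l\<in>I. integral\<^sup>L (M l) (?g l))"
    using assms by (intro product_integral_prod) auto
  also have "\<dots> = (\<Prod>l\<in>{i, j}. integral\<^sup>L (M l) (?g l))"
    using assms by (intro prod.mono_neutral_right) (auto simp: M.prob_space)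
  finally show ?thesis using prod_two_factors[OF assms(1-4), where \<phi>=\<phi> and \<psi>=\<psi>] assms(4) by simp
qed

lemma integral_PiM_pair_components:
  fixes f :: "'a \<Rightarrow> 'a \<Rightarrow> real"
  assumes "finite I" "i \<in> I" "j \<in> I" "i \<noteq> j"
    and f: "(\<lambda>(x, y). f x y) \<in> borel_measurable (M i \<Otimes>\<^sub>M M j)"
    and "\<And>x y. x \<in> space (M i) \<Longrightarrow> y \<in> space (M j) \<Longrightarrow> \<bar>f x y\<bar> \<le> B"
  shows "(\<integral>\<omega>. f (\<omega> i) (\<omega> j) \<partial>PiM I M) = (\<integral>x. \<integral>y. f x y \<partial>M j \<partial>M i)"
proof -
  let ?J = "I - {i}"
  have IJ: "I = {i} \<union> ?J" using assms by auto
  have "(\<lambda>\<omega>. (\<omega> i, \<omega> j)) \<in> measurable (PiM I M) (M i \<Otimes>\<^sub>M M j)"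
    using assms by (auto intro!: measurable_Pair measurable_component_singleton)
  from measurable_compose[OF this f]
  have "integrable (PiM I M) (\<lambda>\<omega>. f (\<omega> i) (\<omega> j))"
    using assms by (intro integrable_const_bound[where B=B]) (auto simp: space_PiM PiE_iff)
  then have "(\<integral>\<omega>. f (\<omega> i) (\<omega> j) \<partial>PiM ({i} \<union> ?J) M)
      = (\<integral>x. (\<integral>y. f (merge {i} ?J (x, y) i) (merge {i} ?J (x, y) j) \<partial>PiM ?J M) \<partial>PiM {i} M)"
    using assms IJ by (intro product_integral_fold) auto
  then have "(\<integral>\<omega>. f (\<omega> i) (\<omega> j) \<partial>PiM I M)
      = (\<integral>x. (\<integral>y. f (merge {i} ?J (x, y) i) (merge {i} ?J (x, y) j) \<partial>PiM ?J M) \<partial>PiM {i} M)"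
    using IJ by simp
  also have "\<dots> = (\<integral>x. (\<integral>y. f (x i) (y j) \<partial>PiM ?J M) \<partial>PiM {i} M)"
    using assms by (simp add: merge_def)
  also have "\<dots> = (\<integral>x. (\<integral>y. f (x i) y \<partial>M j) \<partial>PiM {i} M)"
  proof (intro Bochner_Integration.integral_cong refl)
    fix x assume "x \<in> space (PiM {i} M)"
    then have "(\<lambda>y. f (x i) y) \<in> borel_measurable (M j)"
      using measurable_Pair2[OF f, of "x i"] by (auto simp: space_PiM)
    then show "(\<integral>y. f (x i) (y j) \<partial>PiM ?J M) = (\<integral>y. f (x i) y \<partial>M j)"
      using assms by (intro product_prob_space.integral_PiM_component[OF product_prob_space_axioms]) auto
  qed
  also have "\<dots> = (\<integral>x. \<integral>y. f x y \<partial>M j \<partial>M i)"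
    using f by (intro product_integral_singleton M.borel_measurable_lebesgue_integral)
  finally show ?thesis .
qed

end

lemma (in prob_space) abs_integral_le_const:
  fixes f :: "'a \<Rightarrow> real"
  assumes "f \<in> borel_measurable M" "\<And>x. x \<in> space M \<Longrightarrow> \<bar>f x\<bar> \<le> B"
  shows "\<bar>expectation f\<bar> \<le> B"
proof -
  have "\<bar>expectation f\<bar> \<le> expectation (\<lambda>x. \<bar>f x\<bar>)"
    by (rule integral_abs_bound)
  also have "\<dots> \<le> B"
    using assms by (intro integral_le_const integrable_const_bound[where B=B]) auto
  finally show ?thesis .
qed

lemma integral_double_sum:
  fixes f :: "'i \<Rightarrow> 'j \<Rightarrow> 'a \<Rightarrow> real"
  assumes "\<And>i j. i \<in> I \<Longrightarrow> j \<in> J \<Longrightarrow> integrable M (f i j)"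
  shows "(\<integral>x. (\<Sum>i\<in>I. \<Sum>j\<in>J. f i j x) \<partial>M) = (\<Sum>i\<in>I. \<Sum>j\<in>J. \<integral>x. f i j x \<partial>M)"
  by (subst Bochner_Integration.integral_sum)
    (auto intro!: sum.cong Bochner_Integration.integral_sum Bochner_Integration.integrable_sum assms)

lemma integrable_double_sum:
  fixes f :: "'i \<Rightarrow> 'j \<Rightarrow> 'a \<Rightarrow> real"
  assumes "\<And>i j. i \<in> I \<Longrightarrow> j \<in> J \<Longrightarrow> integrable M (f i j)"
  shows "integrable M (\<lambda>x. \<Sum>i\<in>I. \<Sum>j\<in>J. f i j x)"
  using assms by (auto intro!: Bochner_Integration.integrable_sum)

section \<open>The kernel inner product and the MMD\<close>

lemma sum_blocks_div:
  fixes f :: "nat \<Rightarrow> 'a::comm_semiring_1"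
  shows "(\<Sum>i<L * N. f (i div N)) = of_nat N * (\<Sum>l<L. f l)"
proof -
  have "(\<Sum>i<L * N. f (i div N)) = (\<Sum>l<L. \<Sum>i\<in>{l * N..<l * N + N}. f (i div N))"
    by (rule sum.nat_group[symmetric])
  also have "\<dots> = (\<Sum>l<L. \<Sum>i\<in>{l * N..<l * N + N}. f l)"
    by (intro sum.cong refl arg_cong[where f=f] div_nat_eqI) (auto simp: mult.commute)
  finally show ?thesis by (simp add: sum_distrib_left)
qed

definition kernel_inner :: "('a \<Rightarrow> 'a \<Rightarrow> real) \<Rightarrow> 'a measure \<Rightarrow> 'a measure \<Rightarrow> real" where
  "kernel_inner k P Q = (LINT x|P. LINT y|Q. k x y)"

lemma mmd_eq_kernel_inner:
  "mmd k P Q = sqrt (kernel_inner k P P - 2 * kernel_inner k P Q + kernel_inner k Q Q)"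
  by (simp add: mmd_def kernel_inner_def)

lemma quadratic_nonneg_imp_discriminant_le:
  fixes X Y W :: real
  assumes nonneg: "\<And>t. 0 \<le> X + 2 * t * W + t\<^sup>2 * Y" and "0 \<le> Y"
  shows "W\<^sup>2 \<le> X * Y"
proof (cases "Y = 0")
  case True
  have "W = 0"
  proof (rule ccontr)
    assume "W \<noteq> 0"
    then have "X + 2 * (- (X + 1) / (2 * W)) * W + (- (X + 1) / (2 * W))\<^sup>2 * Y = -1"
      using True by (simp add: field_simps)
    with nonneg show False by (metis neg_0_le_iff_le not_one_le_zero)
  qed
  then show ?thesis using True by simp
next
  case False
  with \<open>0 \<le> Y\<close> have "0 < Y" by simp
  have "0 \<le> X + 2 * (- W / Y) * W + (- W / Y)\<^sup>2 * Y" by (rule nonneg)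
  also have "\<dots> = X - W\<^sup>2 / Y" using \<open>0 < Y\<close> by (simp add: field_simps power2_eq_square)
  finally show ?thesis using \<open>0 < Y\<close> by (simp add: field_simps)
qed

locale bounded_pd_kernel =
  fixes M :: "'a measure" and k :: "'a \<Rightarrow> 'a \<Rightarrow> real"
  assumes pd: "pd_kernel M k"
    and measurable_kernel: "(\<lambda>(x, y). k x y) \<in> borel_measurable (M \<Otimes>\<^sub>M M)"
    and kernel_bounded: "\<forall>x\<in>space M. \<forall>y\<in>space M. \<bar>k x y\<bar> \<le> 1"
begin

lemma kernel_commute: "x \<in> space M \<Longrightarrow> y \<in> space M \<Longrightarrow> k x y = k y x"
  using pd by (simp add: pd_kernel_def)

lemma measurable_kernel_on:
  assumes "sets P = sets M" "sets Q = sets M"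
  shows "(\<lambda>(x, y). k x y) \<in> borel_measurable (P \<Otimes>\<^sub>M Q)"
  using measurable_kernel by (simp add: measurable_cong_sets[OF sets_pair_measure_cong[OF assms] refl])

lemma measurable_kernel_left:
  assumes "sets Q = sets M" "x \<in> space M"
  shows "(\<lambda>y. k x y) \<in> borel_measurable Q"
  using measurable_Pair2[OF measurable_kernel assms(2)] by (simp add: measurable_cong_sets[OF assms(1) refl])

lemma measurable_kernel_right:
  assumes "sets Q = sets M" "y \<in> space M"
  shows "(\<lambda>x. k x y) \<in> borel_measurable Q"
  using measurable_Pair1[OF measurable_kernel assms(2)] by (simp add: measurable_cong_sets[OF assms(1) refl])

lemma measurable_kernel_mean:
  assumes "sets P = sets M" "Q \<in> space (prob_algebra M)"
  shows "(\<lambda>x. LINT y|Q. k x y) \<in> borel_measurable P"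
proof -
  interpret Q: prob_space Q using assms(2) by (simp add: space_prob_algebra)
  show ?thesis
    using measurable_kernel_on[OF assms(1)] assms(2)
    by (intro Q.borel_measurable_lebesgue_integral) (auto simp: space_prob_algebra)
qed

lemma abs_kernel_mean_le:
  assumes "Q \<in> space (prob_algebra M)" "x \<in> space M"
  shows "\<bar>LINT y|Q. k x y\<bar> \<le> 1"
proof -
  interpret Q: prob_space Q using assms(1) by (simp add: space_prob_algebra)
  have sets_Q: "sets Q = sets M" using assms(1) by (simp add: space_prob_algebra)
  show ?thesis
  proof (rule Q.abs_integral_le_const)
    show "(\<lambda>y. k x y) \<in> borel_measurable Q" by (rule measurable_kernel_left[OF sets_Q assms(2)])
    show "\<bar>k x y\<bar> \<le> 1" if "y \<in> space Q" for y
      using that assms(2) kernel_bounded sets_eq_imp_space_eq[OF sets_Q] by auto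
  qed
qed

lemma abs_kernel_inner_le:
  assumes "P \<in> space (prob_algebra M)" "Q \<in> space (prob_algebra M)"
  shows "\<bar>kernel_inner k P Q\<bar> \<le> 1"
  unfolding kernel_inner_def
proof -
  interpret P: prob_space P using assms(1) by (simp add: space_prob_algebra)
  have sets_P: "sets P = sets M" using assms(1) by (simp add: space_prob_algebra)
  show "\<bar>LINT x|P. LINT y|Q. k x y\<bar> \<le> 1"
  proof (rule P.abs_integral_le_const)
    show "(\<lambda>x. LINT y|Q. k x y) \<in> borel_measurable P" by (rule measurable_kernel_mean[OF sets_P assms(2)])
    show "\<bar>LINT y|Q. k x y\<bar> \<le> 1" if "x \<in> space P" for x
      using that abs_kernel_mean_le[OF assms(2)] sets_eq_imp_space_eq[OF sets_P] by auto
  qed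
qed

lemma kernel_inner_commute:
  assumes "P \<in> space (prob_algebra M)" "Q \<in> space (prob_algebra M)"
  shows "kernel_inner k P Q = kernel_inner k Q P"
proof -
  interpret P: prob_space P using assms(1) by (simp add: space_prob_algebra)
  interpret Q: prob_space Q using assms(2) by (simp add: space_prob_algebra)
  interpret PQ: pair_prob_space P Q ..
  have sets: "sets P = sets M" "sets Q = sets M" using assms by (auto simp: space_prob_algebra)
  have spaces: "space P = space M" "space Q = space M"
    using sets_eq_imp_space_eq[OF sets(1)] sets_eq_imp_space_eq[OF sets(2)] by auto
  have "integrable (P \<Otimes>\<^sub>M Q) (\<lambda>(x, y). k x y)"
  proof (rule PQ.integrable_const_bound[where B=1])
    show "AE p in P \<Otimes>\<^sub>M Q. norm (case p of (x, y) \<Rightarrow> k x y) \<le> 1"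
      using kernel_bounded by (intro AE_I2) (auto simp: space_pair_measure spaces)
  qed (rule measurable_kernel_on[OF sets])
  then have "kernel_inner k P Q = (LINT y|Q. LINT x|P. k x y)"
    unfolding kernel_inner_def by (simp add: PQ.Fubini_integral)
  also have "\<dots> = kernel_inner k Q P"
    unfolding kernel_inner_def
  proof (intro Bochner_Integration.integral_cong refl)
    fix x y assume "x \<in> space Q" "y \<in> space P"
    then show "k y x = k x y" using kernel_commute spaces by auto
  qed
  finally show ?thesis .
qed

lemma integrable_kernel_PiM_coordinates:
  assumes \<mu>: "\<And>i. \<mu> i \<in> space (prob_algebra M)" and "i \<in> I" "j \<in> I"
  shows "integrable (PiM I \<mu>) (\<lambda>\<omega>. k (\<omega> i) (\<omega> j))"
proof -
  interpret product_prob_space \<mu> I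
    using \<mu> by (intro product_prob_spaceI) (simp add: space_prob_algebra)
  have sets_\<mu>: "sets (\<mu> l) = sets M" for l using \<mu> by (simp add: space_prob_algebra)
  have coordinate: "(\<lambda>\<omega>. \<omega> l) \<in> measurable (PiM I \<mu>) M" if "l \<in> I" for l
    using measurable_component_singleton[OF that, of \<mu>] by (simp add: measurable_cong_sets[OF refl sets_\<mu>])
  show ?thesis
  proof (rule P.integrable_const_bound[where B=1])
    show "AE \<omega> in PiM I \<mu>. norm (k (\<omega> i) (\<omega> j)) \<le> 1"
      using kernel_bounded assms(2,3) measurable_space[OF coordinate] by (intro AE_I2) auto
  qed (use measurable_compose[OF measurable_Pair[OF coordinate coordinate] measurable_kernel] assms in auto)
qed

lemma integral_kernel_PiM_coordinates:
  assumes \<mu>: "\<And>i. \<mu> i \<in> space (prob_algebra M)" and "finite I" "i \<in> I" "j \<in> I" "i \<noteq> j"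
  shows "(\<integral>\<omega>. k (\<omega> i) (\<omega> j) \<partial>PiM I \<mu>) = kernel_inner k (\<mu> i) (\<mu> j)"
proof -
  interpret product_prob_space \<mu> I
    using \<mu> by (intro product_prob_spaceI) (simp add: space_prob_algebra)
  have sets_\<mu>: "sets (\<mu> l) = sets M" for l using \<mu> by (simp add: space_prob_algebra)
  show ?thesis
    unfolding kernel_inner_def using assms kernel_bounded sets_eq_imp_space_eq[OF sets_\<mu>]
    by (intro integral_PiM_pair_components[where B=1] measurable_kernel_on sets_\<mu>) auto
qed

text \<open>Integrating the positive definiteness of \<open>k\<close> against independent draws
  \<open>\<omega> i \<sim> \<mu> i\<close> reproduces the kernel inner products off the diagonal; the diagonal
  terms cost at most \<open>2 * c i\<^sup>2\<close>.\<close>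
lemma kernel_inner_form_lower_bound:
  fixes \<mu> :: "nat \<Rightarrow> 'a measure" and c :: "nat \<Rightarrow> real"
  assumes \<mu>: "\<And>i. \<mu> i \<in> space (prob_algebra M)"
  shows "0 \<le> (\<Sum>i<m. \<Sum>j<m. c i * c j * kernel_inner k (\<mu> i) (\<mu> j)) + 2 * (\<Sum>i<m. (c i)\<^sup>2)"
proof -
  interpret product_prob_space \<mu> "{..<m}"
    using \<mu> by (intro product_prob_spaceI) (simp add: space_prob_algebra)
  let ?\<Pi> = "PiM {..<m} \<mu>"
  let ?E = "\<lambda>i j. \<integral>\<omega>. k (\<omega> i) (\<omega> j) \<partial>?\<Pi>"
  have space_\<mu>: "space (\<mu> i) = space M" for i
    using \<mu> sets_eq_imp_space_eq[of "\<mu> i" M] by (simp add: space_prob_algebra)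
  have diagonal: "?E i i \<le> kernel_inner k (\<mu> i) (\<mu> i) + 2" if "i < m" for i
  proof -
    have "(\<lambda>\<omega>. k (\<omega> i) (\<omega> i)) \<in> borel_measurable ?\<Pi>"
      using integrable_kernel_PiM_coordinates[where \<mu>=\<mu>, OF \<mu>, of i "{..<m}" i] that by auto
    moreover have "\<bar>k (\<omega> i) (\<omega> i)\<bar> \<le> 1" if "\<omega> \<in> space ?\<Pi>" for \<omega>
      using that \<open>i < m\<close> kernel_bounded by (auto simp: space_PiM PiE_iff space_\<mu>)
    ultimately have "\<bar>?E i i\<bar> \<le> 1" by (rule P.abs_integral_le_const)
    moreover have "\<bar>kernel_inner k (\<mu> i) (\<mu> i)\<bar> \<le> 1" by (intro abs_kernel_inner_le \<mu>)
    ultimately show ?thesis by auto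
  qed
  have "0 \<le> (\<integral>\<omega>. (\<Sum>i<m. \<Sum>j<m. c i * c j * k (\<omega> i) (\<omega> j)) \<partial>?\<Pi>)"
  proof (intro integral_nonneg_AE AE_I2)
    fix \<omega> assume "\<omega> \<in> space ?\<Pi>"
    then have "\<forall>i<m. \<omega> i \<in> space M"
      by (auto simp: space_PiM PiE_iff space_\<mu>)
    then show "0 \<le> (\<Sum>i<m. \<Sum>j<m. c i * c j * k (\<omega> i) (\<omega> j))"
      using pd unfolding pd_kernel_def by blast
  qed
  also have "\<dots> = (\<Sum>i<m. \<Sum>j<m. c i * c j * ?E i j)"
    using integrable_kernel_PiM_coordinates[where \<mu>=\<mu>, OF \<mu>] by (subst integral_double_sum) auto
  also have "\<dots> \<le> (\<Sum>i<m. \<Sum>j<m. c i * c j * kernel_inner k (\<mu> i) (\<mu> j)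
                                  + (if i = j then 2 * (c i)\<^sup>2 else 0))"
  proof (intro sum_mono)
    fix i j assume ij: "i \<in> {..<m}" "j \<in> {..<m}"
    show "c i * c j * ?E i j \<le> c i * c j * kernel_inner k (\<mu> i) (\<mu> j) + (if i = j then 2 * (c i)\<^sup>2 else 0)"
    proof (cases "i = j")
      case True
      have "c i * c i * ?E i i \<le> c i * c i * (kernel_inner k (\<mu> i) (\<mu> i) + 2)"
        using ij by (intro mult_left_mono diagonal) auto
      then show ?thesis using True by (simp add: power2_eq_square algebra_simps)
    qed (use integral_kernel_PiM_coordinates[where \<mu>=\<mu>, OF \<mu>] ij in auto)
  qed
  also have "\<dots> = (\<Sum>i<m. \<Sum>j<m. c i * c j * kernel_inner k (\<mu> i) (\<mu> j)) + 2 * (\<Sum>i<m. (c i)\<^sup>2)"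
    by (simp add: sum.distrib sum_distrib_left)
  finally show ?thesis .
qed

text \<open>Apply the previous bound to \<open>N\<close> independent copies of each \<open>P l\<close>, each with weight
  \<open>a l / N\<close>: the diagonal error is then \<open>2 * (\<Sum>l<L. (a l)\<^sup>2) / N\<close>.\<close>
lemma kernel_inner_psd:
  fixes P :: "nat \<Rightarrow> 'a measure" and a :: "nat \<Rightarrow> real"
  assumes P: "\<And>l. P l \<in> space (prob_algebra M)"
  shows "0 \<le> (\<Sum>l<L. \<Sum>l'<L. a l * a l' * kernel_inner k (P l) (P l'))"
proof -
  define \<Phi> where "\<Phi> = (\<Sum>l<L. \<Sum>l'<L. a l * a l' * kernel_inner k (P l) (P l'))"
  define S where "S = (\<Sum>l<L. (a l)\<^sup>2)"
  have "- (2 * S / real N) \<le> \<Phi>" if N: "N > 0" for N :: nat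
  proof -
    let ?c = "\<lambda>i. a (i div N) / real N"
    have "(\<Sum>i<L * N. \<Sum>j<L * N. ?c i * ?c j * kernel_inner k (P (i div N)) (P (j div N)))
        = (\<Sum>i<L * N. real N * (\<Sum>l'<L. ?c i * (a l' / real N) * kernel_inner k (P (i div N)) (P l')))"
      by (intro sum.cong refl sum_blocks_div)
    also have "\<dots> = real N * (\<Sum>l<L. real N * (\<Sum>l'<L. (a l / real N) * (a l' / real N) * kernel_inner k (P l) (P l')))"
      by (rule sum_blocks_div)
    also have "\<dots> = \<Phi>"
      unfolding \<Phi>_def using N by (simp add: sum_distrib_left)
    finally have form: "(\<Sum>i<L * N. \<Sum>j<L * N. ?c i * ?c j * kernel_inner k (P (i div N)) (P (j div N))) = \<Phi>" .
    have "(\<Sum>i<L * N. (?c i)\<^sup>2) = real N * (\<Sum>l<L. (a l / real N)\<^sup>2)"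
      by (rule sum_blocks_div)
    also have "\<dots> = S / real N"
      unfolding S_def using N by (simp add: sum_distrib_left sum_divide_distrib power2_eq_square)
    finally have diag: "(\<Sum>i<L * N. (?c i)\<^sup>2) = S / real N" .
    show ?thesis
      using kernel_inner_form_lower_bound[where \<mu>="\<lambda>i. P (i div N)" and m="L * N" and c="\<lambda>i. a (i div N) / real N"] P
      unfolding form diag by simp
  qed
  then have "\<forall>N\<ge>1. - (2 * S / real N) \<le> \<Phi>" by simp
  moreover have "(\<lambda>N. - (2 * S / real N)) \<longlonglongrightarrow> 0"
    using tendsto_minus[OF lim_const_over_n[of "2 * S"]] by simp
  ultimately show ?thesis unfolding \<Phi>_def by (intro LIMSEQ_le_const2) blast+
qed

lemma mmd_radicand_nonneg:
  assumes "P \<in> space (prob_algebra M)" "Q \<in> space (prob_algebra M)"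
  shows "0 \<le> kernel_inner k P P - 2 * kernel_inner k P Q + kernel_inner k Q Q"
proof -
  let ?a = "\<lambda>l::nat. if l = 0 then 1 else - 1 :: real"
  let ?P = "\<lambda>l::nat. if l = 0 then P else Q"
  have "0 \<le> (\<Sum>l<2. \<Sum>l'<2. ?a l * ?a l' * kernel_inner k (?P l) (?P l'))"
    using assms by (intro kernel_inner_psd) auto
  also have "\<dots> = kernel_inner k P P - kernel_inner k P Q - kernel_inner k Q P + kernel_inner k Q Q"
    by (simp add: numeral_2_eq_2 lessThan_Suc)
  finally show ?thesis using kernel_inner_commute[OF assms] by simp
qed

lemma power2_mmd:
  assumes "P \<in> space (prob_algebra M)" "Q \<in> space (prob_algebra M)"
  shows "(mmd k P Q)\<^sup>2 = kernel_inner k P P - 2 * kernel_inner k P Q + kernel_inner k Q Q"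
  unfolding mmd_eq_kernel_inner using mmd_radicand_nonneg[OF assms] by simp

lemma mmd_nonneg:
  assumes "P \<in> space (prob_algebra M)" "Q \<in> space (prob_algebra M)"
  shows "0 \<le> mmd k P Q"
  unfolding mmd_eq_kernel_inner using mmd_radicand_nonneg[OF assms] by simp

lemma mmd_commute:
  assumes "P \<in> space (prob_algebra M)" "Q \<in> space (prob_algebra M)"
  shows "mmd k P Q = mmd k Q P"
  unfolding mmd_eq_kernel_inner using kernel_inner_commute[OF assms] by (simp add: algebra_simps)

text \<open>Cauchy--Schwarz for the positive semidefinite form, applied to the combination
  \<open>P + (t - 1) Q - t R\<close>.\<close>
lemma mmd_triangle:
  assumes P: "P \<in> space (prob_algebra M)" and Q: "Q \<in> space (prob_algebra M)"
    and R: "R \<in> space (prob_algebra M)"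
  shows "mmd k P R \<le> mmd k P Q + mmd k Q R"
proof -
  define X where "X = kernel_inner k P P - 2 * kernel_inner k P Q + kernel_inner k Q Q"
  define Y where "Y = kernel_inner k Q Q - 2 * kernel_inner k Q R + kernel_inner k R R"
  define W where "W = kernel_inner k P Q + kernel_inner k Q R - kernel_inner k P R - kernel_inner k Q Q"
  have X: "0 \<le> X" unfolding X_def using P Q by (rule mmd_radicand_nonneg)
  have Y: "0 \<le> Y" unfolding Y_def using Q R by (rule mmd_radicand_nonneg)
  have "0 \<le> X + 2 * t * W + t\<^sup>2 * Y" for t
  proof -
    let ?a = "\<lambda>l::nat. if l = 0 then 1 else if l = 1 then t - 1 else - t"
    let ?P = "\<lambda>l::nat. if l = 0 then P else if l = 1 then Q else R"
    have "0 \<le> (\<Sum>l<3. \<Sum>l'<3. ?a l * ?a l' * kernel_inner k (?P l) (?P l'))"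
      using P Q R by (intro kernel_inner_psd) auto
    also have "\<dots> = X + 2 * t * W + t\<^sup>2 * Y"
      using kernel_inner_commute[OF P Q] kernel_inner_commute[OF Q R] kernel_inner_commute[OF P R]
      by (simp add: numeral_3_eq_3 lessThan_Suc X_def Y_def W_def power2_eq_square algebra_simps)
    finally show ?thesis .
  qed
  then have "W\<^sup>2 \<le> X * Y" using Y by (rule quadratic_nonneg_imp_discriminant_le)
  then have "W \<le> sqrt X * sqrt Y"
    by (metis real_le_rsqrt real_sqrt_mult)
  then have "X + Y + 2 * W \<le> (sqrt X + sqrt Y)\<^sup>2"
    using X Y by (simp add: power2_eq_square algebra_simps)
  then have "sqrt (X + Y + 2 * W) \<le> sqrt X + sqrt Y"
    using X Y by (intro real_le_lsqrt) auto
  then show ?thesis unfolding mmd_eq_kernel_inner X_def Y_def W_def by (simp add: algebra_simps)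
qed

lemma mmd_minimiser_le_twice:
  assumes P0: "P0 \<in> space (prob_algebra M)" and P: "P \<in> space (prob_algebra M)"
    and model: "\<forall>\<theta>\<in>\<Theta>. P\<^sub>\<theta> \<theta> \<in> space (prob_algebra M)"
    and well_specified: "(INF \<theta>\<in>\<Theta>. mmd k (P\<^sub>\<theta> \<theta>) P0) = 0"
    and minimiser: "\<theta>\<^sub>P \<in> \<Theta>" "\<forall>\<theta>\<in>\<Theta>. (mmd k P (P\<^sub>\<theta> \<theta>\<^sub>P))\<^sup>2 \<le> (mmd k P (P\<^sub>\<theta> \<theta>))\<^sup>2"
  shows "mmd k P0 (P\<^sub>\<theta> \<theta>\<^sub>P) \<le> 2 * mmd k P0 P"
proof -
  have close: "mmd k P0 (P\<^sub>\<theta> \<theta>\<^sub>P) \<le> 2 * mmd k P0 P + mmd k (P\<^sub>\<theta> \<theta>) P0" if "\<theta> \<in> \<Theta>" for \<theta>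
  proof -
    have P\<theta>: "P\<^sub>\<theta> \<theta> \<in> space (prob_algebra M)" and P\<theta>\<^sub>P: "P\<^sub>\<theta> \<theta>\<^sub>P \<in> space (prob_algebra M)"
      using model that minimiser(1) by auto
    have "(mmd k P (P\<^sub>\<theta> \<theta>\<^sub>P))\<^sup>2 \<le> (mmd k P (P\<^sub>\<theta> \<theta>))\<^sup>2" using minimiser(2) that by blast
    then have "mmd k P (P\<^sub>\<theta> \<theta>\<^sub>P) \<le> mmd k P (P\<^sub>\<theta> \<theta>)"
      using mmd_nonneg[OF P P\<theta>] by (rule power2_le_imp_le)
    then have "mmd k P0 (P\<^sub>\<theta> \<theta>\<^sub>P) \<le> mmd k P0 P + mmd k P (P\<^sub>\<theta> \<theta>)"
      using mmd_triangle[OF P0 P P\<theta>\<^sub>P] by linarith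
    also have "\<dots> \<le> mmd k P0 P + (mmd k P P0 + mmd k P0 (P\<^sub>\<theta> \<theta>))"
      using mmd_triangle[OF P P0 P\<theta>] by linarith
    finally show ?thesis
      using mmd_commute[OF P P0] mmd_commute[OF P0 P\<theta>] by simp
  qed
  show ?thesis
  proof (rule field_le_epsilon)
    fix e :: real assume "0 < e"
    with well_specified have "Inf ((\<lambda>\<theta>. mmd k (P\<^sub>\<theta> \<theta>) P0) ` \<Theta>) < e" by simp
    then obtain \<theta> where "\<theta> \<in> \<Theta>" "mmd k (P\<^sub>\<theta> \<theta>) P0 < e"
      using cInf_lessD[of "(\<lambda>\<theta>. mmd k (P\<^sub>\<theta> \<theta>) P0) ` \<Theta>" e] minimiser(1) by blast
    with close[of \<theta>] show "mmd k P0 (P\<^sub>\<theta> \<theta>\<^sub>P) \<le> 2 * mmd k P0 P + e" by simp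
  qed
qed

lemma minimiser_far_subset:
  assumes P0: "P0 \<in> space (prob_algebra M)"
    and model: "\<forall>\<theta>\<in>\<Theta>. P\<^sub>\<theta> \<theta> \<in> space (prob_algebra M)"
    and well_specified: "(INF \<theta>\<in>\<Theta>. mmd k (P\<^sub>\<theta> \<theta>) P0) = 0"
    and minimiser: "\<forall>Q\<in>space (prob_algebra M). \<theta>\<^sub>o\<^sub>p\<^sub>t Q \<in> \<Theta> \<and>
      (\<forall>\<theta>\<in>\<Theta>. (mmd k Q (P\<^sub>\<theta> (\<theta>\<^sub>o\<^sub>p\<^sub>t Q)))\<^sup>2 \<le> (mmd k Q (P\<^sub>\<theta> \<theta>))\<^sup>2)"
  shows "{Q \<in> space (prob_algebra M). \<epsilon> < mmd k P0 (P\<^sub>\<theta> (\<theta>\<^sub>o\<^sub>p\<^sub>t Q))}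
    \<subseteq> {Q \<in> space (prob_algebra M). \<epsilon> / 2 < mmd k P0 Q}"
proof safe
  fix Q assume Q: "Q \<in> space (prob_algebra M)" and "\<epsilon> < mmd k P0 (P\<^sub>\<theta> (\<theta>\<^sub>o\<^sub>p\<^sub>t Q))"
  moreover have "mmd k P0 (P\<^sub>\<theta> (\<theta>\<^sub>o\<^sub>p\<^sub>t Q)) \<le> 2 * mmd k P0 Q"
    using minimiser Q by (intro mmd_minimiser_le_twice[OF P0 Q model well_specified]) auto
  ultimately show "\<epsilon> / 2 < mmd k P0 Q" by simp
qed

end

section \<open>The MMD of a weighted Dirac measure\<close>

lemma weighted_dirac_eq_distr:
  assumes "\<And>j. j < m \<Longrightarrow> 0 \<le> w j" "\<And>j. j < m \<Longrightarrow> y j \<in> space M"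
  shows "weighted_dirac M m y w = distr (point_measure {..<m} (\<lambda>j. ennreal (w j))) M y"
proof -
  let ?N = "distr (point_measure {..<m} (\<lambda>j. ennreal (w j))) M y"
  have y: "y \<in> measurable (point_measure {..<m} (\<lambda>j. ennreal (w j))) M"
    using assms(2) by (auto simp: point_measure_def)
  have "(\<Sum>j<m. ennreal (w j) * indicator A (y j)) = emeasure ?N A" if "A \<in> sets M" for A
  proof -
    have "emeasure ?N A = emeasure (point_measure {..<m} (\<lambda>j. ennreal (w j))) (y -` A \<inter> {..<m})"
      using that y by (simp add: emeasure_distr space_point_measure)
    also have "\<dots> = (\<Sum>j \<in> y -` A \<inter> {..<m}. ennreal (w j))"
      by (rule emeasure_point_measure_finite) auto
    also have "\<dots> = (\<Sum>j<m. ennreal (w j) * indicator A (y j))"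
      by (rule sum.mono_neutral_cong_left) (auto simp: indicator_def)
    finally show ?thesis by simp
  qed
  then have "weighted_dirac M m y w = measure_of (space M) (sets M) (emeasure ?N)"
    unfolding weighted_dirac_def by (intro measure_of_eq sets.space_closed) (simp add: sets.sigma_sets_eq)
  also have "\<dots> = ?N"
    using measure_of_of_measure[of ?N] by simp
  finally show ?thesis .
qed

lemma weighted_dirac_in_prob_algebra:
  assumes "\<And>j. j < m \<Longrightarrow> 0 \<le> w j" "(\<Sum>j<m. w j) = 1" "\<And>j. j < m \<Longrightarrow> y j \<in> space M"
  shows "weighted_dirac M m y w \<in> space (prob_algebra M)"
proof -
  let ?W = "point_measure {..<m} (\<lambda>j. ennreal (w j))"
  have "emeasure ?W {..<m} = (\<Sum>j<m. ennreal (w j))"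
    by (rule emeasure_point_measure_finite) auto
  also have "\<dots> = 1" using assms(1,2) by (subst sum_ennreal) auto
  finally have "prob_space ?W" by (intro prob_spaceI) (simp add: space_point_measure)
  moreover have "y \<in> measurable ?W M"
    using assms(3) by (auto simp: point_measure_def)
  ultimately show ?thesis
    using weighted_dirac_eq_distr[OF assms(1,3)]
    by (simp add: space_prob_algebra prob_space.prob_space_distr)
qed

lemma integral_weighted_dirac:
  fixes f :: "'a \<Rightarrow> real"
  assumes "\<And>j. j < m \<Longrightarrow> 0 \<le> w j" "\<And>j. j < m \<Longrightarrow> y j \<in> space M" "f \<in> borel_measurable M"
  shows "integral\<^sup>L (weighted_dirac M m y w) f = (\<Sum>j<m. w j * f (y j))"
proof -
  have y: "y \<in> measurable (point_measure {..<m} (\<lambda>j. ennreal (w j))) M"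
    using assms(2) by (auto simp: point_measure_def)
  have "integral\<^sup>L (weighted_dirac M m y w) f
      = integral\<^sup>L (point_measure {..<m} (\<lambda>j. ennreal (w j))) (\<lambda>j. f (y j))"
    using integral_distr[OF y assms(3)] weighted_dirac_eq_distr[OF assms(1,2)] by simp
  also have "\<dots> = integral\<^sup>L (count_space {..<m}) (\<lambda>j. w j * f (y j))"
    unfolding point_measure_def using assms(1) by (subst integral_density) auto
  also have "\<dots> = (\<Sum>j<m. w j * f (y j))"
    by (rule lebesgue_integral_count_space_finite) simp
  finally show ?thesis .
qed

text \<open>\<open>centered_kernel k P x y\<close> is the RKHS inner product of \<open>k x - \<mu>\<^sub>P\<close> and \<open>k y - \<mu>\<^sub>P\<close>, where
  \<open>\<mu>\<^sub>P\<close> is the kernel mean embedding of \<open>P\<close>.\<close>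
definition centered_kernel :: "('a \<Rightarrow> 'a \<Rightarrow> real) \<Rightarrow> 'a measure \<Rightarrow> 'a \<Rightarrow> 'a \<Rightarrow> real" where
  "centered_kernel k P x y = k x y - (LINT z|P. k x z) - (LINT z|P. k y z) + kernel_inner k P P"

definition centered_form ::
  "('a \<Rightarrow> 'a \<Rightarrow> real) \<Rightarrow> 'a measure \<Rightarrow> nat \<Rightarrow> (nat \<Rightarrow> 'a) \<Rightarrow> (nat \<Rightarrow> real) \<Rightarrow> real" where
  "centered_form k P m y w = (\<Sum>i<m. \<Sum>j<m. w i * w j * centered_kernel k P (y i) (y j))"

lemma centered_form_cong:
  "(\<And>j. j < m \<Longrightarrow> w j = w' j) \<Longrightarrow> centered_form k P m y w = centered_form k P m y w'"
  unfolding centered_form_def by simp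

lemma centered_form_scale:
  "centered_form k P m y (\<lambda>j. w j / S) = centered_form k P m y w / S\<^sup>2"
  unfolding centered_form_def by (simp add: sum_divide_distrib power2_eq_square)

lemma sum_weights_centering:
  fixes w a :: "nat \<Rightarrow> real"
  assumes "(\<Sum>j<m. w j) = 1"
  shows "(\<Sum>i<m. \<Sum>j<m. w i * w j * (K i j - a i - a j + c))
       = (\<Sum>i<m. \<Sum>j<m. w i * w j * K i j) - 2 * (\<Sum>i<m. w i * a i) + c"
proof -
  have "(\<Sum>i<m. \<Sum>j<m. w i * w j * a i) = (\<Sum>i<m. w i * a i) * (\<Sum>j<m. w j)"
    unfolding sum_product by (simp add: mult_ac)
  moreover have "(\<Sum>i<m. \<Sum>j<m. w i * w j * a j) = (\<Sum>i<m. w i) * (\<Sum>j<m. w j * a j)"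
    unfolding sum_product by (simp add: mult_ac)
  moreover have "(\<Sum>i<m. \<Sum>j<m. w i * w j * c) = (\<Sum>i<m. w i) * (\<Sum>j<m. w j * c)"
    unfolding sum_product by (simp add: mult_ac)
  moreover have "(\<Sum>j<m. w j * c) = c"
    using assms by (simp add: sum_distrib_right[symmetric])
  ultimately show ?thesis
    using assms by (simp add: algebra_simps sum.distrib sum_subtractf)
qed

context bounded_pd_kernel
begin

lemma measurable_centered_kernel:
  assumes "P0 \<in> space (prob_algebra M)"
  shows "(\<lambda>(x, y). centered_kernel k P0 x y) \<in> borel_measurable (M \<Otimes>\<^sub>M M)"
proof -
  have "(\<lambda>x. LINT z|P0. k x z) \<in> borel_measurable M" by (rule measurable_kernel_mean[OF refl assms])
  then show ?thesis
    unfolding centered_kernel_def using measurable_kernel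
    by (auto intro!: borel_measurable_add borel_measurable_diff simp: case_prod_beta)
qed

lemma abs_centered_kernel_le:
  assumes "P0 \<in> space (prob_algebra M)" "x \<in> space M" "y \<in> space M"
  shows "\<bar>centered_kernel k P0 x y\<bar> \<le> 4"
proof -
  have "\<bar>k x y\<bar> \<le> 1" using kernel_bounded assms by blast
  moreover have "\<bar>LINT z|P0. k x z\<bar> \<le> 1" "\<bar>LINT z|P0. k y z\<bar> \<le> 1"
    using abs_kernel_mean_le[OF assms(1)] assms by auto
  moreover have "\<bar>kernel_inner k P0 P0\<bar> \<le> 1" by (rule abs_kernel_inner_le[OF assms(1,1)])
  ultimately show ?thesis unfolding centered_kernel_def by linarith
qed

lemma integral_centered_kernel_right:
  assumes P0: "P0 \<in> space (prob_algebra M)" and x: "x \<in> space M"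
  shows "(\<integral>y. centered_kernel k P0 x y \<partial>P0) = 0"
proof -
  interpret P0: prob_space P0 using P0 by (simp add: space_prob_algebra)
  have sets_P0: "sets P0 = sets M" using P0 by (simp add: space_prob_algebra)
  have space_P0: "space P0 = space M" using sets_eq_imp_space_eq[OF sets_P0] .
  have integrable_k: "integrable P0 (\<lambda>y. k x y)"
    using x kernel_bounded
    by (intro P0.integrable_const_bound[where B=1] measurable_kernel_left[OF sets_P0 x]) (auto simp: space_P0)
  have integrable_mean: "integrable P0 (\<lambda>y. LINT z|P0. k y z)"
    using abs_kernel_mean_le[OF P0]
    by (intro P0.integrable_const_bound[where B=1] measurable_kernel_mean[OF sets_P0 P0]) (auto simp: space_P0)
  have "(\<integral>y. centered_kernel k P0 x y \<partial>P0)
      = (LINT y|P0. k x y) - (LINT z|P0. k x z) - kernel_inner k P0 P0 + kernel_inner k P0 P0"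
    unfolding centered_kernel_def kernel_inner_def using integrable_k integrable_mean
    by (simp add: P0.prob_space)
  then show ?thesis by simp
qed

lemma power2_mmd_weighted_dirac:
  assumes P0: "P0 \<in> space (prob_algebra M)"
    and w: "\<And>j. j < m \<Longrightarrow> 0 \<le> w j" "(\<Sum>j<m. w j) = 1" and y: "\<And>j. j < m \<Longrightarrow> y j \<in> space M"
  shows "(mmd k P0 (weighted_dirac M m y w))\<^sup>2 = centered_form k P0 m y w"
proof -
  let ?P = "weighted_dirac M m y w"
  let ?mean = "\<lambda>x. LINT z|P0. k x z"
  have P: "?P \<in> space (prob_algebra M)" by (rule weighted_dirac_in_prob_algebra[OF w y])
  have space_P: "space ?P = space M"
    using P by (intro sets_eq_imp_space_eq) (simp add: space_prob_algebra)
  have inner_P: "(LINT z|?P. k x z) = (\<Sum>j<m. w j * k x (y j))" if "x \<in> space M" for x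
    using that by (intro integral_weighted_dirac[OF w(1) y] measurable_kernel_left) auto
  have "kernel_inner k ?P P0 = (\<Sum>j<m. w j * ?mean (y j))"
    unfolding kernel_inner_def
    using y by (intro integral_weighted_dirac[OF w(1) y] measurable_kernel_mean[OF refl P0])
  then have cross: "kernel_inner k P0 ?P = (\<Sum>j<m. w j * ?mean (y j))"
    using kernel_inner_commute[OF P0 P] by simp
  have "kernel_inner k ?P ?P = (LINT x|?P. (\<Sum>j<m. w j * k x (y j)))"
    unfolding kernel_inner_def using inner_P by (intro Bochner_Integration.integral_cong) (auto simp: space_P)
  also have "\<dots> = (\<Sum>i<m. w i * (\<Sum>j<m. w j * k (y i) (y j)))"
    using y by (intro integral_weighted_dirac[OF w(1) y] borel_measurable_sum borel_measurable_times
        borel_measurable_const measurable_kernel_right) auto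
  finally have square: "kernel_inner k ?P ?P = (\<Sum>i<m. \<Sum>j<m. w i * w j * k (y i) (y j))"
    by (simp add: sum_distrib_left mult.assoc)
  have "(mmd k P0 ?P)\<^sup>2 = kernel_inner k P0 P0 - 2 * kernel_inner k P0 ?P + kernel_inner k ?P ?P"
    by (rule power2_mmd[OF P0 P])
  also have "\<dots> = centered_form k P0 m y w"
    unfolding centered_form_def centered_kernel_def sum_weights_centering[OF w(2)] cross square
    by simp
  finally show ?thesis .
qed

lemma centered_form_gt_of_mmd_gt:
  assumes "P0 \<in> space (prob_algebra M)" "\<And>j. j < m \<Longrightarrow> 0 \<le> w j" "(\<Sum>j<m. w j) = 1"
    "\<And>j. j < m \<Longrightarrow> y j \<in> space M" and r: "0 \<le> r" "r < mmd k P0 (weighted_dirac M m y w)"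
  shows "r\<^sup>2 < centered_form k P0 m y w"
proof -
  have "r\<^sup>2 < (mmd k P0 (weighted_dirac M m y w))\<^sup>2" using r by (intro power_strict_mono) auto
  then show ?thesis using power2_mmd_weighted_dirac[OF assms(1-4)] by simp
qed

lemma centered_form_nonneg:
  assumes P0: "P0 \<in> space (prob_algebra M)"
    and w: "\<And>j. j < m \<Longrightarrow> 0 \<le> w j" and y: "\<And>j. j < m \<Longrightarrow> y j \<in> space M"
  shows "0 \<le> centered_form k P0 m y w"
proof (cases "(\<Sum>j<m. w j) = 0")
  case True
  then have "\<forall>j<m. w j = 0" using sum_nonneg_eq_0_iff[of "{..<m}" w] w by auto
  then show ?thesis by (simp add: centered_form_def)
next
  case False
  define S where "S = (\<Sum>j<m. w j)"
  have "0 \<le> S" unfolding S_def using w by (intro sum_nonneg) auto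
  with False have S: "0 < S" unfolding S_def by simp
  have "0 \<le> (mmd k P0 (weighted_dirac M m y (\<lambda>j. w j / S)))\<^sup>2" by simp
  also have "\<dots> = centered_form k P0 m y w / S\<^sup>2"
    using S w y by (subst power2_mmd_weighted_dirac[OF P0])
      (auto simp: centered_form_scale S_def sum_divide_distrib[symmetric])
  finally show ?thesis using S by (simp add: zero_le_divide_iff)
qed

end

section \<open>Gamma and Dirichlet weights\<close>

abbreviation gamma_distribution :: "real \<Rightarrow> real measure" where
  "gamma_distribution b \<equiv> density lborel (gamma_density b)"

lemma measurable_gamma_density [measurable]: "gamma_density b \<in> borel_measurable borel"
  unfolding gamma_density_def by measurable

lemma gamma_density_nonneg: "0 < b \<Longrightarrow> 0 \<le> gamma_density b x"
  unfolding gamma_density_def by (auto intro!: divide_nonneg_pos mult_nonneg_nonneg Gamma_real_pos)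

lemma nn_integral_gamma_density:
  assumes b: "0 < b"
  shows "(\<integral>\<^sup>+x. ennreal (gamma_density b x) \<partial>lborel) = 1"
proof -
  have G: "0 < Gamma b" using b by (rule Gamma_real_pos)
  have "((\<lambda>t. t powr (b - 1) / exp t / Gamma b) has_integral Gamma b / Gamma b) {0..}"
    using Gamma_integral_real[OF b] by (rule has_integral_divide)
  then have "(\<integral>\<^sup>+x. ennreal (indicator {0..} x * (x powr (b - 1) / exp x / Gamma b)) \<partial>lborel) = 1"
    using G by (subst nn_integral_has_integral_lebesgue) auto
  moreover have "ennreal (indicator {0..} x * (x powr (b - 1) / exp x / Gamma b)) = ennreal (gamma_density b x)"
    for x :: real
    by (cases "x > 0"; cases "x = 0") (auto simp: gamma_density_def exp_minus field_simps indicator_def)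
  ultimately show ?thesis by simp
qed

lemma prob_space_gamma_distribution: "0 < b \<Longrightarrow> prob_space (gamma_distribution b)"
  by (rule prob_spaceI) (simp add: emeasure_density nn_integral_gamma_density)

lemma integrable_gamma_density: "0 < b \<Longrightarrow> integrable lborel (gamma_density b)"
  by (rule integrableI_nonneg) (auto simp: nn_integral_gamma_density gamma_density_nonneg)

lemma integral_gamma_density: "0 < b \<Longrightarrow> integral\<^sup>L lborel (gamma_density b) = 1"
  by (subst integral_eq_nn_integral) (auto simp: nn_integral_gamma_density gamma_density_nonneg)

lemma gamma_density_shift:
  assumes b: "0 < b"
  shows "x * gamma_density b x = b * gamma_density (b + 1) x"
proof (cases "x > 0")
  case True
  have "b \<notin> \<int>\<^sub>\<le>\<^sub>0" using b nonpos_Ints_nonpos by force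
  then have "Gamma (b + 1) = b * Gamma b" using Gamma_plus1[of b] by simp
  moreover have "x * x powr (b - 1) = x powr b" using True by (simp add: powr_mult_base)
  moreover have "0 < Gamma b" using b by (rule Gamma_real_pos)
  ultimately show ?thesis using True b by (simp add: gamma_density_def field_simps)
next
  case False
  then show ?thesis by (simp add: gamma_density_def)
qed

lemma gamma_distribution_mean:
  assumes b: "0 < b"
  shows "integrable (gamma_distribution b) (\<lambda>x. x)" "(\<integral>x. x \<partial>gamma_distribution b) = b"
proof -
  have eq: "(\<lambda>x. gamma_density b x * x) = (\<lambda>x. b * gamma_density (b + 1) x)"
    using gamma_density_shift[OF b] by (auto simp: mult.commute)
  show "integrable (gamma_distribution b) (\<lambda>x. x)"
    using b by (subst integrable_density) (auto simp: eq gamma_density_nonneg integrable_gamma_density)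
  show "(\<integral>x. x \<partial>gamma_distribution b) = b"
    using b by (subst integral_density) (auto simp: eq gamma_density_nonneg integral_gamma_density)
qed

lemma gamma_distribution_second_moment:
  assumes b: "0 < b"
  shows "integrable (gamma_distribution b) (\<lambda>x. x\<^sup>2)"
    "(\<integral>x. x\<^sup>2 \<partial>gamma_distribution b) = b * (b + 1)"
proof -
  have eq: "(\<lambda>x. gamma_density b x * x\<^sup>2) = (\<lambda>x. b * (b + 1) * gamma_density (b + 1 + 1) x)"
  proof
    fix x
    have "gamma_density b x * x\<^sup>2 = x * (x * gamma_density b x)" by (simp add: power2_eq_square)
    also have "\<dots> = b * ((b + 1) * gamma_density (b + 1 + 1) x)"
      using b by (simp add: gamma_density_shift)
    finally show "gamma_density b x * x\<^sup>2 = b * (b + 1) * gamma_density (b + 1 + 1) x" by simp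
  qed
  show "integrable (gamma_distribution b) (\<lambda>x. x\<^sup>2)"
    using b by (subst integrable_density) (auto simp: eq gamma_density_nonneg integrable_gamma_density)
  show "(\<integral>x. x\<^sup>2 \<partial>gamma_distribution b) = b * (b + 1)"
    using b by (subst integral_density) (auto simp: eq gamma_density_nonneg integral_gamma_density)
qed

lemma AE_gamma_distribution_pos: "AE x in gamma_distribution b. 0 < x"
  by (subst AE_density) (auto intro!: AE_I2 simp: gamma_density_def)

definition gamma_vector :: "nat \<Rightarrow> (nat \<Rightarrow> real) \<Rightarrow> (nat \<Rightarrow> real) measure" where
  "gamma_vector m a = PiM {..<m} (\<lambda>j. gamma_distribution (a j))"

lemma dirichlet_eq_distr_gamma_vector:
  "dirichlet m a = distr (gamma_vector m a) (PiM {..<m} (\<lambda>_. borel)) (simplex_normalize m)"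
  unfolding dirichlet_def gamma_vector_def ..

lemma sets_gamma_vector: "sets (gamma_vector m a) = sets (PiM {..<m} (\<lambda>_. borel))"
  unfolding gamma_vector_def by (rule sets_PiM_cong) auto

lemma measurable_gamma_vector_component:
  "j < m \<Longrightarrow> (\<lambda>g. g j) \<in> borel_measurable (gamma_vector m a)"
  using measurable_component_singleton[of j "{..<m}" "\<lambda>_. borel"]
  by (simp add: measurable_cong_sets[OF sets_gamma_vector refl])

context
  fixes a :: "nat \<Rightarrow> real"
  assumes a_pos: "\<And>j. 0 < a j"
begin

lemma product_prob_space_gamma: "product_prob_space (\<lambda>j. gamma_distribution (a j))"
  by (intro product_prob_spaceI prob_space_gamma_distribution a_pos)

lemma prob_space_gamma_vector: "prob_space (gamma_vector m a)"
  unfolding gamma_vector_def by (intro prob_space_PiM prob_space_gamma_distribution a_pos)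

lemma AE_gamma_vector_pos: "AE g in gamma_vector m a. \<forall>j<m. 0 < g j"
proof -
  interpret product_prob_space "\<lambda>j. gamma_distribution (a j)" "{..<m}"
    by (rule product_prob_space_gamma)
  have "\<forall>j\<in>{..<m}. AE g in gamma_vector m a. 0 < g j"
    unfolding gamma_vector_def using AE_component AE_gamma_distribution_pos by blast
  then have "AE g in gamma_vector m a. \<forall>j\<in>{..<m}. 0 < g j"
    by (subst AE_finite_all) auto
  then show ?thesis by (rule AE_mp) (auto intro!: AE_I2)
qed

lemma gamma_vector_mean:
  assumes "i < m"
  shows "integrable (gamma_vector m a) (\<lambda>g. g i)" "(\<integral>g. g i \<partial>gamma_vector m a) = a i"
proof -
  interpret product_prob_space "\<lambda>j. gamma_distribution (a j)" "{..<m}"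
    by (rule product_prob_space_gamma)
  show "integrable (gamma_vector m a) (\<lambda>g. g i)"
    unfolding gamma_vector_def using assms a_pos
    by (intro integrable_PiM_component gamma_distribution_mean) auto
  show "(\<integral>g. g i \<partial>gamma_vector m a) = a i"
    unfolding gamma_vector_def using assms a_pos
    by (subst integral_PiM_component) (auto simp: gamma_distribution_mean)
qed

lemma gamma_vector_product_moment:
  assumes "i < m" "j < m"
  shows "integrable (gamma_vector m a) (\<lambda>g. g i * g j)"
    "(\<integral>g. g i * g j \<partial>gamma_vector m a) = (if i = j then a i * (a i + 1) else a i * a j)"
proof -
  interpret product_prob_space "\<lambda>j. gamma_distribution (a j)" "{..<m}"
    by (rule product_prob_space_gamma)
  have "integrable (gamma_vector m a) (\<lambda>g. g i * g j) \<and>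
      (\<integral>g. g i * g j \<partial>gamma_vector m a) = (if i = j then a i * (a i + 1) else a i * a j)"
  proof (cases "i = j")
    case True
    have "integrable (gamma_vector m a) (\<lambda>g. (g i)\<^sup>2)"
      unfolding gamma_vector_def using assms a_pos
      by (intro integrable_PiM_component gamma_distribution_second_moment) auto
    moreover have "(\<integral>g. (g i)\<^sup>2 \<partial>gamma_vector m a) = a i * (a i + 1)"
      unfolding gamma_vector_def using assms a_pos
      by (subst integral_PiM_component) (auto simp: gamma_distribution_second_moment)
    ultimately show ?thesis using True by (simp add: power2_eq_square)
  next
    case False
    have "integrable (gamma_vector m a) (\<lambda>g. g i * g j)"
      unfolding gamma_vector_def using assms a_pos False
      by (intro integrable_PiM_two_components gamma_distribution_mean) auto
    moreover have "(\<integral>g. g i * g j \<partial>gamma_vector m a) = a i * a j"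
      unfolding gamma_vector_def using assms a_pos False
      by (subst integral_PiM_two_components) (auto simp: gamma_distribution_mean)
    ultimately show ?thesis using False by simp
  qed
  then show "integrable (gamma_vector m a) (\<lambda>g. g i * g j)"
    "(\<integral>g. g i * g j \<partial>gamma_vector m a) = (if i = j then a i * (a i + 1) else a i * a j)"
    by auto
qed

text \<open>Chebyshev's inequality for \<open>\<Sum>i<n. g i\<close>, whose mean and variance are both \<open>n\<close>.\<close>
lemma gamma_vector_partial_sum_small:
  assumes "n \<le> m" "0 < n" "\<And>j. j < n \<Longrightarrow> a j = 1"
  shows "measure (gamma_vector m a) {g \<in> space (gamma_vector m a). (\<Sum>i<n. g i) < real n / 2}
    \<le> 4 / real n"
proof -
  let ?G = "gamma_vector m a"
  let ?S = "\<lambda>g::nat \<Rightarrow> real. \<Sum>i<n. g i"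
  interpret G: prob_space ?G by (rule prob_space_gamma_vector)
  note mean = gamma_vector_mean[of i for i] and moment = gamma_vector_product_moment
  have S_measurable: "?S \<in> borel_measurable ?G"
    using assms measurable_gamma_vector_component by auto
  have integrable_products: "integrable ?G (\<lambda>g. g i * g j)" if "i < n" "j < n" for i j
    using that assms by (intro moment) auto
  have "integrable ?G (\<lambda>g. (?S g)\<^sup>2)"
    unfolding power2_eq_square sum_product using integrable_products by (rule integrable_double_sum) auto
  moreover have "integrable ?G ?S"
    using assms mean by (intro Bochner_Integration.integrable_sum) auto
  moreover have "G.expectation ?S = real n"
    using assms mean by (simp add: Bochner_Integration.integral_sum)
  moreover have "G.expectation (\<lambda>g. (?S g)\<^sup>2) = real n * (real n + 1)"
  proof -
    have "G.expectation (\<lambda>g. (?S g)\<^sup>2) = (\<Sum>i<n. \<Sum>j<n. \<integral>g. g i * g j \<partial>?G)"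
      unfolding power2_eq_square sum_product using integrable_products
      by (subst integral_double_sum) auto
    also have "\<dots> = (\<Sum>i<n. \<Sum>j<n. 1 + (if i = j then 1 else 0))"
      using assms by (intro sum.cong refl) (simp add: moment)
    finally show ?thesis by (simp add: sum.distrib)
  qed
  ultimately have variance: "G.variance ?S = real n"
    by (subst G.variance_eq) (auto simp: power2_eq_square algebra_simps)
  have "{g \<in> space ?G. ?S g < real n / 2} \<subseteq> {g \<in> space ?G. real n / 2 \<le> \<bar>?S g - G.expectation ?S\<bar>}"
    using \<open>G.expectation ?S = real n\<close> by auto
  then have "measure ?G {g \<in> space ?G. ?S g < real n / 2}
      \<le> measure ?G {g \<in> space ?G. real n / 2 \<le> \<bar>?S g - G.expectation ?S\<bar>}"
    using S_measurable by (intro G.finite_measure_mono) auto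
  also have "\<dots> \<le> G.variance ?S / (real n / 2)\<^sup>2"
    using \<open>integrable ?G (\<lambda>g. (?S g)\<^sup>2)\<close> assms S_measurable
    by (intro G.Chebyshev_inequality) auto
  also have "\<dots> = real n / (real n / 2)\<^sup>2"
    unfolding variance ..
  also have "\<dots> = 4 / real n"
    using assms by (simp add: power2_eq_square field_simps)
  finally show ?thesis .
qed

end

lemma simplex_normalize_nonneg: "j < m \<Longrightarrow> 0 \<le> simplex_normalize m g j"
  unfolding simplex_normalize_def by (auto intro!: divide_nonneg_pos)

lemma sum_simplex_normalize: "0 < m \<Longrightarrow> (\<Sum>j<m. simplex_normalize m g j) = 1"
  unfolding simplex_normalize_def by (auto simp: sum_divide_distrib[symmetric])

lemma simplex_normalize_pos:
  assumes "\<And>j. j < m \<Longrightarrow> 0 < g j" "j < m"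
  shows "simplex_normalize m g j = g j / (\<Sum>i<m. g i)"
proof -
  have "0 < (\<Sum>i<m. g i)" using assms by (intro sum_pos) auto
  then show ?thesis using assms unfolding simplex_normalize_def by (auto simp: less_imp_le)
qed

lemma measurable_simplex_normalize:
  "simplex_normalize m \<in> measurable (PiM {..<m} (\<lambda>_. borel)) (PiM {..<m} (\<lambda>_. borel :: real measure))"
  unfolding simplex_normalize_def by measurable

lemma simplex_normalize_in_space:
  "simplex_normalize m g \<in> space (PiM {..<m} (\<lambda>_. borel :: real measure))"
  unfolding simplex_normalize_def by (auto simp: space_PiM)

section \<open>Posterior mass far from \<open>P0\<close>\<close>

text \<open>No measurability of \<open>f\<close> is needed: \<open>distr\<close> yields the null measure for a non-measurable map.\<close>
lemma emeasure_distr_le_preimage: "emeasure (distr M N f) A \<le> emeasure M (f -` A \<inter> space M)"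
  unfolding distr_def emeasure_measure_of_conv by auto

lemma integral_le_enn2real_nn_integral:
  fixes f :: "'a \<Rightarrow> real"
  assumes "\<And>x. 0 \<le> f x"
  shows "integral\<^sup>L M f \<le> enn2real (\<integral>\<^sup>+x. ennreal (f x) \<partial>M)"
proof (cases "integrable M f")
  case True
  then show ?thesis using assms by (subst integral_eq_nn_integral) auto
next
  case False
  then show ?thesis by (simp add: not_integrable_integral_eq)
qed

lemma ennreal_measure_le_emeasure: "ennreal (measure M A) \<le> emeasure M A"
  by (simp add: measure_def ennreal_enn2real_if)

lemma card_pairs_not_both_data:
  "(\<Sum>i<n + T. \<Sum>j<n + T. if i < n \<and> j < n \<and> i \<noteq> j then 0 else 1 :: real)
    \<le> real (n + T) * (1 + 2 * real T)"
proof -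
  have pseudo: "(\<Sum>i<n + T. if n \<le> i then 1 else 0 :: real) = real T"
  proof -
    have "(\<Sum>i<n + T. if n \<le> i then 1 else 0 :: real) = (\<Sum>i\<in>{n..<n + T}. 1)"
      by (intro sum.mono_neutral_cong_right) auto
    then show ?thesis by simp
  qed
  then have pseudo': "(\<Sum>i<T + n. if n \<le> i then 1 else 0 :: real) = real T"
    by (simp add: add.commute)
  have "(\<Sum>i<n + T. \<Sum>j<n + T. if i < n \<and> j < n \<and> i \<noteq> j then 0 else 1 :: real)
      \<le> (\<Sum>i<n + T. \<Sum>j<n + T. (if i = j then 1 else 0) + (if n \<le> i then 1 else 0)
                                 + (if n \<le> j then 1 else 0 :: real))"
    by (intro sum_mono) auto
  also have "\<dots> = (\<Sum>i<n + T. 1 + real (n + T) * (if n \<le> i then 1 else 0) + real T)"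
    by (intro sum.cong refl) (simp add: sum.distrib pseudo)
  also have "\<dots> = real (n + T) * (1 + 2 * real T)"
    by (simp add: sum.distrib pseudo pseudo' sum_distrib_left[symmetric] algebra_simps)
  finally show ?thesis .
qed

definition posterior_concentration :: "real \<Rightarrow> nat \<Rightarrow> nat \<Rightarrow> nat \<Rightarrow> real" where
  "posterior_concentration \<alpha> T n = (\<lambda>j. if j < n then 1 else \<alpha> / real T)"

definition augmented_sample :: "nat \<Rightarrow> (nat \<Rightarrow> 'a) \<Rightarrow> (nat \<Rightarrow> 'a) \<Rightarrow> nat \<Rightarrow> 'a" where
  "augmented_sample n x x' = (\<lambda>j. if j < n then x j else x' (j - n))"

lemma approx_posterior_eq:
  "approx_posterior M F \<alpha> T n x =
     distr (dirichlet (n + T) (posterior_concentration \<alpha> T n) \<Otimes>\<^sub>M PiM {..<T} (\<lambda>_. F)) (prob_algebra M)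
       (\<lambda>(w, x'). weighted_dirac M (n + T) (augmented_sample n x x') w)"
  unfolding approx_posterior_def posterior_concentration_def augmented_sample_def ..

locale mmd_posterior = bounded_pd_kernel +
  fixes P0 F :: "'a measure" and \<alpha> :: real and T :: nat
  assumes P0_prob: "P0 \<in> space (prob_algebra M)" and F_prob: "F \<in> space (prob_algebra M)"
    and alpha_pos: "0 < \<alpha>" and T_pos: "0 < T"
begin

abbreviation data_space :: "nat \<Rightarrow> (nat \<Rightarrow> 'a) measure" where
  "data_space n \<equiv> PiM {..<n} (\<lambda>_. P0)"

abbreviation pseudo_space :: "(nat \<Rightarrow> 'a) measure" where
  "pseudo_space \<equiv> PiM {..<T} (\<lambda>_. F)"

abbreviation gamma_weights :: "nat \<Rightarrow> (nat \<Rightarrow> real) measure" where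
  "gamma_weights n \<equiv> gamma_vector (n + T) (posterior_concentration \<alpha> T n)"

lemma posterior_concentration_pos: "0 < posterior_concentration \<alpha> T n j"
  using alpha_pos T_pos by (simp add: posterior_concentration_def)

lemma posterior_concentration_le: "posterior_concentration \<alpha> T n j \<le> 1 + \<alpha> / real T"
  using alpha_pos by (simp add: posterior_concentration_def)

lemma prob_space_data_space: "prob_space (data_space n)"
  using P0_prob by (intro prob_space_PiM) (simp add: space_prob_algebra)

lemma prob_space_pseudo_space: "prob_space pseudo_space"
  using F_prob by (intro prob_space_PiM) (simp add: space_prob_algebra)

lemma prob_space_gamma_weights: "prob_space (gamma_weights n)"
  by (rule prob_space_gamma_vector) (rule posterior_concentration_pos)

lemma AE_gamma_weights_pos: "AE g in gamma_weights n. \<forall>j<n + T. 0 < g j"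
  by (rule AE_gamma_vector_pos) (rule posterior_concentration_pos)

lemma gamma_weights_product_moment:
  assumes "i < n + T" "j < n + T"
  shows "integrable (gamma_weights n) (\<lambda>g. g i * g j)"
    "(\<integral>g. g i * g j \<partial>gamma_weights n) = (if i = j
        then posterior_concentration \<alpha> T n i * (posterior_concentration \<alpha> T n i + 1)
        else posterior_concentration \<alpha> T n i * posterior_concentration \<alpha> T n j)"
  using gamma_vector_product_moment[of "posterior_concentration \<alpha> T n", OF posterior_concentration_pos assms]
  by auto

lemma sets_P0: "sets P0 = sets M" and sets_F: "sets F = sets M"
  using P0_prob F_prob by (simp_all add: space_prob_algebra)

lemma measurable_augmented_sample:
  assumes "j < n + T"
  shows "(\<lambda>(x, x'). augmented_sample n x x' j) \<in> measurable (data_space n \<Otimes>\<^sub>M pseudo_space) M"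
proof (cases "j < n")
  case True
  have "(\<lambda>x. x j) \<in> measurable (data_space n) M"
    using measurable_component_singleton[of j "{..<n}" "\<lambda>_. P0"] True
    by (simp add: measurable_cong_sets[OF refl sets_P0])
  then show ?thesis using True by (simp add: augmented_sample_def case_prod_beta)
next
  case False
  then have "(\<lambda>x'. x' (j - n)) \<in> measurable pseudo_space M"
    using measurable_component_singleton[of "j - n" "{..<T}" "\<lambda>_. F"] assms
    by (simp add: measurable_cong_sets[OF refl sets_F])
  then show ?thesis using False by (simp add: augmented_sample_def case_prod_beta)
qed

lemma augmented_sample_in_space:
  assumes "x \<in> space (data_space n)" "x' \<in> space pseudo_space" "j < n + T"
  shows "augmented_sample n x x' j \<in> space M"
  using assms sets_eq_imp_space_eq[OF sets_P0] sets_eq_imp_space_eq[OF sets_F]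
  by (auto simp: augmented_sample_def space_PiM PiE_iff)

lemma measurable_centered_kernel_augmented:
  assumes "i < n + T" "j < n + T"
  shows "(\<lambda>(x, x'). centered_kernel k P0 (augmented_sample n x x' i) (augmented_sample n x x' j))
    \<in> borel_measurable (data_space n \<Otimes>\<^sub>M pseudo_space)"
  using measurable_compose[OF measurable_Pair[OF measurable_augmented_sample measurable_augmented_sample]
      measurable_centered_kernel[OF P0_prob]] assms
  by (simp add: case_prod_beta)

lemma measurable_centered_kernel_pseudo:
  assumes "x \<in> space (data_space n)" "i < n + T" "j < n + T"
  shows "(\<lambda>x'. centered_kernel k P0 (augmented_sample n x x' i) (augmented_sample n x x' j))
    \<in> borel_measurable pseudo_space"
  using measurable_Pair2[OF measurable_centered_kernel_augmented[OF assms(2,3)] assms(1)] by simp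

lemma integrable_centered_kernel_augmented:
  assumes "x \<in> space (data_space n)" "i < n + T" "j < n + T"
  shows "integrable pseudo_space
    (\<lambda>x'. centered_kernel k P0 (augmented_sample n x x' i) (augmented_sample n x x' j))"
proof -
  interpret pseudo: prob_space pseudo_space by (rule prob_space_pseudo_space)
  show ?thesis
  proof (rule pseudo.integrable_const_bound[where B=4])
    show "AE x' in pseudo_space.
        norm (centered_kernel k P0 (augmented_sample n x x' i) (augmented_sample n x x' j)) \<le> 4"
      using assms by (intro AE_I2) (auto intro!: abs_centered_kernel_le P0_prob augmented_sample_in_space)
  qed (rule measurable_centered_kernel_pseudo[OF assms])
qed

definition centered_pair_mean :: "nat \<Rightarrow> (nat \<Rightarrow> 'a) \<Rightarrow> nat \<Rightarrow> nat \<Rightarrow> real" where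
  "centered_pair_mean n x i j =
     (\<integral>x'. centered_kernel k P0 (augmented_sample n x x' i) (augmented_sample n x x' j) \<partial>pseudo_space)"

definition pseudo_mean_form :: "nat \<Rightarrow> (nat \<Rightarrow> 'a) \<Rightarrow> (nat \<Rightarrow> real) \<Rightarrow> real" where
  "pseudo_mean_form n x g = (\<Sum>i<n + T. \<Sum>j<n + T. g i * g j * centered_pair_mean n x i j)"

definition expected_form :: "nat \<Rightarrow> (nat \<Rightarrow> 'a) \<Rightarrow> real" where
  "expected_form n x = (\<integral>g. pseudo_mean_form n x g \<partial>gamma_weights n)"

lemma centered_form_augmented_nonneg:
  assumes "x \<in> space (data_space n)" "x' \<in> space pseudo_space" "\<And>j. j < n + T \<Longrightarrow> 0 \<le> w j"
  shows "0 \<le> centered_form k P0 (n + T) (augmented_sample n x x') w"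
  using assms by (intro centered_form_nonneg P0_prob augmented_sample_in_space) auto

lemma measurable_centered_form_pseudo:
  "x \<in> space (data_space n) \<Longrightarrow>
    (\<lambda>x'. centered_form k P0 (n + T) (augmented_sample n x x') w) \<in> borel_measurable pseudo_space"
  unfolding centered_form_def using measurable_centered_kernel_pseudo by auto

lemma measurable_centered_form_augmented:
  "x \<in> space (data_space n) \<Longrightarrow> (\<lambda>(w, x'). centered_form k P0 (n + T) (augmented_sample n x x') w)
    \<in> borel_measurable (PiM {..<n + T} (\<lambda>_. borel) \<Otimes>\<^sub>M pseudo_space)"
  unfolding centered_form_def case_prod_beta using measurable_centered_kernel_pseudo
  by (auto intro!: borel_measurable_sum borel_measurable_times measurable_compose[OF measurable_snd]
      measurable_compose[OF measurable_fst measurable_component_singleton])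

lemma pseudo_mean_form_eq_integral:
  assumes x: "x \<in> space (data_space n)"
  shows "pseudo_mean_form n x g
    = (\<integral>x'. centered_form k P0 (n + T) (augmented_sample n x x') g \<partial>pseudo_space)"
  unfolding pseudo_mean_form_def centered_form_def centered_pair_mean_def
  using integrable_centered_kernel_augmented[OF x] by (subst integral_double_sum) auto

lemma pseudo_mean_form_nonneg:
  assumes "x \<in> space (data_space n)" "\<And>j. j < n + T \<Longrightarrow> 0 \<le> g j"
  shows "0 \<le> pseudo_mean_form n x g"
  unfolding pseudo_mean_form_eq_integral[OF assms(1)] using assms
  by (intro integral_nonneg_AE AE_I2 centered_form_augmented_nonneg) auto

lemma measurable_pseudo_mean_form: "pseudo_mean_form n x \<in> borel_measurable (gamma_weights n)"
  unfolding pseudo_mean_form_def using measurable_gamma_vector_component by auto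

lemma integrable_pseudo_mean_form: "integrable (gamma_weights n) (pseudo_mean_form n x)"
  unfolding pseudo_mean_form_def using gamma_weights_product_moment(1)
  by (intro integrable_double_sum integrable_mult_left) auto

lemma expected_form_eq:
  "expected_form n x
    = (\<Sum>i<n + T. \<Sum>j<n + T. (\<integral>g. g i * g j \<partial>gamma_weights n) * centered_pair_mean n x i j)"
  unfolding expected_form_def pseudo_mean_form_def
  using gamma_weights_product_moment(1) by (subst integral_double_sum) auto

lemma emeasure_gamma_weights_small_sum:
  assumes "0 < n"
  shows "emeasure (gamma_weights n) {g \<in> space (gamma_weights n). (\<Sum>i<n. g i) < real n / 2}
    \<le> ennreal (4 / real n)"
proof -
  interpret G: prob_space "gamma_weights n" by (rule prob_space_gamma_weights)
  show ?thesis
    unfolding G.emeasure_eq_measure using assms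
    by (intro ennreal_leI gamma_vector_partial_sum_small[OF posterior_concentration_pos])
      (auto simp: posterior_concentration_def)
qed

text \<open>Markov's inequality in the pseudo-sample, after undoing the normalisation: off the
  event \<open>\<Sum>i<n. g i < n / 2\<close> the normalising constant is at least \<open>n / 2\<close>.\<close>
lemma emeasure_pseudo_space_far_le:
  assumes x: "x \<in> space (data_space n)" and g: "\<And>j. j < n + T \<Longrightarrow> 0 < g j"
    and g_large: "real n / 2 \<le> (\<Sum>i<n. g i)" and n: "0 < n" and r: "0 < r"
  shows "emeasure pseudo_space
      {x' \<in> space pseudo_space. r\<^sup>2 < centered_form k P0 (n + T) (augmented_sample n x x') (simplex_normalize (n + T) g)}
    \<le> ennreal (4 * pseudo_mean_form n x g / (real n ^ 2 * r\<^sup>2))"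
proof -
  let ?\<Phi> = "\<lambda>x' w. centered_form k P0 (n + T) (augmented_sample n x x') w"
  define S where "S = (\<Sum>i<n + T. g i)"
  define c where "c = real n ^ 2 * r\<^sup>2 / 4"
  have "(\<Sum>i<n. g i) \<le> S"
    unfolding S_def using g by (intro sum_mono2) (auto simp: less_imp_le)
  with g_large have S: "real n / 2 \<le> S" by simp
  have c: "0 < c" using n r by (simp add: c_def)
  have "c \<le> S\<^sup>2 * r\<^sup>2"
  proof -
    have "(real n / 2)\<^sup>2 * r\<^sup>2 \<le> S\<^sup>2 * r\<^sup>2" using S by (intro mult_right_mono power_mono) auto
    then show ?thesis by (simp add: c_def power_divide)
  qed
  have "0 < S" using S n by linarith
  have normalized: "?\<Phi> x' (simplex_normalize (n + T) g) = ?\<Phi> x' g / S\<^sup>2" for x'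
    unfolding centered_form_scale[symmetric] S_def using g
    by (intro centered_form_cong) (simp add: simplex_normalize_pos)
  have "c \<le> ?\<Phi> x' g" if "r\<^sup>2 < ?\<Phi> x' (simplex_normalize (n + T) g)" for x'
  proof -
    have "S\<^sup>2 * r\<^sup>2 \<le> S\<^sup>2 * ?\<Phi> x' (simplex_normalize (n + T) g)"
      using that by (intro mult_left_mono) auto
    also have "\<dots> = ?\<Phi> x' g" using normalized \<open>0 < S\<close> by simp
    finally show ?thesis using \<open>c \<le> S\<^sup>2 * r\<^sup>2\<close> by simp
  qed
  then have "{x' \<in> space pseudo_space. r\<^sup>2 < ?\<Phi> x' (simplex_normalize (n + T) g)}
      \<subseteq> {x' \<in> space pseudo_space. c \<le> ?\<Phi> x' g}"
    by auto
  then have "emeasure pseudo_space {x' \<in> space pseudo_space. r\<^sup>2 < ?\<Phi> x' (simplex_normalize (n + T) g)}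
      \<le> emeasure pseudo_space {x' \<in> space pseudo_space. c \<le> ?\<Phi> x' g}"
    using measurable_centered_form_pseudo[OF x] by (intro emeasure_mono) auto
  also have "\<dots> \<le> ennreal ((1 / c) * (\<integral>x'. ?\<Phi> x' g \<partial>pseudo_space))"
  proof (rule integral_Markov_inequality)
    show "integrable pseudo_space (\<lambda>x'. ?\<Phi> x' g)"
      unfolding centered_form_def using integrable_centered_kernel_augmented[OF x]
      by (intro integrable_double_sum) auto
    show "AE x' in pseudo_space. 0 \<le> ?\<Phi> x' g"
      using x g by (intro AE_I2 centered_form_augmented_nonneg) (auto simp: less_imp_le)
  qed (rule c)
  finally show ?thesis by (simp add: c_def pseudo_mean_form_eq_integral[OF x])
qed

lemma sets_far_weights_event:
  assumes x: "x \<in> space (data_space n)"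
  shows "{p \<in> space (PiM {..<n + T} (\<lambda>_. borel) \<Otimes>\<^sub>M pseudo_space).
      (\<forall>j<n + T. 0 \<le> fst p j) \<and> (\<Sum>j<n + T. fst p j) = 1 \<longrightarrow>
      r\<^sup>2 < centered_form k P0 (n + T) (augmented_sample n x (snd p)) (fst p)}
    \<in> sets (PiM {..<n + T} (\<lambda>_. borel) \<Otimes>\<^sub>M pseudo_space)"
    (is "?Y \<in> sets ?N")
proof -
  have component: "(\<lambda>p. fst p j) \<in> borel_measurable ?N" if "j < n + T" for j
    using that by (intro measurable_compose[OF measurable_fst measurable_component_singleton]) auto
  have "(\<lambda>p. centered_form k P0 (n + T) (augmented_sample n x (snd p)) (fst p)) \<in> borel_measurable ?N"
    using measurable_centered_form_augmented[OF x] by (simp add: case_prod_beta)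
  moreover have "?Y = (\<Union>j<n + T. {p \<in> space ?N. fst p j < 0})
      \<union> (space ?N - {p \<in> space ?N. (\<Sum>j<n + T. fst p j) = 1})
      \<union> {p \<in> space ?N. r\<^sup>2 < centered_form k P0 (n + T) (augmented_sample n x (snd p)) (fst p)}"
    by auto
  ultimately show ?thesis
    using component
    by (auto intro!: sets.Un sets.Diff sets.finite_UN borel_measurable_less borel_measurable_eq
        borel_measurable_sum)
qed

lemma emeasure_approx_posterior_le_slices:
  assumes x: "x \<in> space (data_space n)"
    and far: "A \<subseteq> {Q \<in> space (prob_algebra M). r < mmd k P0 Q}" and r: "0 \<le> r"
  shows "emeasure (approx_posterior M F \<alpha> T n x) A
    \<le> (\<integral>\<^sup>+g. emeasure pseudo_space {x' \<in> space pseudo_space.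
          r\<^sup>2 < centered_form k P0 (n + T) (augmented_sample n x x') (simplex_normalize (n + T) g)}
        \<partial>gamma_weights n)"
proof -
  interpret pseudo: prob_space pseudo_space by (rule prob_space_pseudo_space)
  define m where "m = n + T"
  define W where "W = PiM {..<m} (\<lambda>_. borel :: real measure)"
  define D where "D = dirichlet m (posterior_concentration \<alpha> T n)"
  define f where "f = (\<lambda>(w, x'). weighted_dirac M m (augmented_sample n x x') w)"
  define Y where "Y = {p \<in> space (W \<Otimes>\<^sub>M pseudo_space). (\<forall>j<m. 0 \<le> fst p j) \<and> (\<Sum>j<m. fst p j) = 1 \<longrightarrow>
    r\<^sup>2 < centered_form k P0 m (augmented_sample n x (snd p)) (fst p)}"
  have m: "0 < m" using T_pos by (simp add: m_def)
  have D: "D = distr (gamma_weights n) W (simplex_normalize m)"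
    unfolding D_def W_def m_def by (rule dirichlet_eq_distr_gamma_vector)
  have normalize: "simplex_normalize m \<in> measurable (gamma_weights n) W"
    using measurable_simplex_normalize[of m]
    by (simp add: W_def m_def measurable_cong_sets[OF sets_gamma_vector refl])
  have sets_N: "sets (D \<Otimes>\<^sub>M pseudo_space) = sets (W \<Otimes>\<^sub>M pseudo_space)"
    by (intro sets_pair_measure_cong) (simp_all add: D)
  note space_N = sets_eq_imp_space_eq[OF sets_N]
  have Y: "Y \<in> sets (D \<Otimes>\<^sub>M pseudo_space)"
    unfolding sets_N Y_def W_def m_def by (rule sets_far_weights_event[OF x])
  have "f -` A \<inter> space (D \<Otimes>\<^sub>M pseudo_space) \<subseteq> Y"
  proof (clarsimp simp: Y_def f_def space_N)
    fix w x' assume "(w, x') \<in> space (W \<Otimes>\<^sub>M pseudo_space)" "weighted_dirac M m (augmented_sample n x x') w \<in> A"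
      "\<forall>j<m. 0 \<le> w j" "(\<Sum>j<m. w j) = 1"
    with far r x show "r\<^sup>2 < centered_form k P0 m (augmented_sample n x x') w"
      unfolding m_def
      by (intro centered_form_gt_of_mmd_gt P0_prob augmented_sample_in_space) (auto simp: space_pair_measure)
  qed
  then have "emeasure (approx_posterior M F \<alpha> T n x) A \<le> emeasure (D \<Otimes>\<^sub>M pseudo_space) Y"
    using emeasure_distr_le_preimage[of "D \<Otimes>\<^sub>M pseudo_space" "prob_algebra M" f A] emeasure_mono[OF _ Y]
    unfolding approx_posterior_eq D_def f_def m_def by (meson order_trans)
  also have "\<dots> = (\<integral>\<^sup>+w. emeasure pseudo_space (Pair w -` Y) \<partial>D)"
    using Y by (rule pseudo.emeasure_pair_measure_alt)
  also have "\<dots> = (\<integral>\<^sup>+g. emeasure pseudo_space (Pair (simplex_normalize m g) -` Y) \<partial>gamma_weights n)"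
    unfolding D using pseudo.measurable_emeasure_Pair[OF Y]
    by (subst nn_integral_distr[OF normalize]) (simp_all add: D)
  also have "\<dots> = (\<integral>\<^sup>+g. emeasure pseudo_space {x' \<in> space pseudo_space.
          r\<^sup>2 < centered_form k P0 m (augmented_sample n x x') (simplex_normalize m g)} \<partial>gamma_weights n)"
    using m simplex_normalize_in_space
    by (intro nn_integral_cong arg_cong[where f="emeasure pseudo_space"])
      (auto simp: Y_def W_def space_pair_measure simplex_normalize_nonneg sum_simplex_normalize)
  finally show ?thesis unfolding m_def .
qed

lemma emeasure_approx_posterior_far_le:
  assumes x: "x \<in> space (data_space n)"
    and far: "A \<subseteq> {Q \<in> space (prob_algebra M). r < mmd k P0 Q}" and n: "0 < n" and r: "0 < r"
  shows "emeasure (approx_posterior M F \<alpha> T n x) A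
    \<le> ennreal (4 / real n) + ennreal (4 * expected_form n x / (real n ^ 2 * r\<^sup>2))"
proof -
  let ?G = "gamma_weights n"
  let ?slice = "\<lambda>g. emeasure pseudo_space {x' \<in> space pseudo_space.
    r\<^sup>2 < centered_form k P0 (n + T) (augmented_sample n x x') (simplex_normalize (n + T) g)}"
  let ?q = "\<lambda>g. 4 * pseudo_mean_form n x g / (real n ^ 2 * r\<^sup>2)"
  define Z where "Z = {g \<in> space ?G. (\<Sum>i<n. g i) < real n / 2}"
  interpret pseudo: prob_space pseudo_space by (rule prob_space_pseudo_space)
  have Z: "Z \<in> sets ?G" unfolding Z_def using measurable_gamma_vector_component by measurable
  have "AE g in ?G. ?slice g \<le> indicator Z g + ennreal (?q g)"
    using AE_gamma_weights_pos
  proof (rule AE_mp, intro AE_I2 impI)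
    fix g assume "g \<in> space ?G" "\<forall>j<n + T. 0 < g j"
    show "?slice g \<le> indicator Z g + ennreal (?q g)"
    proof (cases "g \<in> Z")
      case True
      then show ?thesis by (simp add: pseudo.emeasure_le_1 add_increasing2)
    next
      case False
      with \<open>g \<in> space ?G\<close> \<open>\<forall>j<n + T. 0 < g j\<close> have "?slice g \<le> ennreal (?q g)"
        by (intro emeasure_pseudo_space_far_le[OF x _ _ n r]) (auto simp: Z_def not_less)
      then show ?thesis by (simp add: add_increasing)
    qed
  qed
  then have "(\<integral>\<^sup>+g. ?slice g \<partial>?G) \<le> (\<integral>\<^sup>+g. indicator Z g + ennreal (?q g) \<partial>?G)"
    by (rule nn_integral_mono_AE)
  with emeasure_approx_posterior_le_slices[OF x far] r
  have "emeasure (approx_posterior M F \<alpha> T n x) A \<le> (\<integral>\<^sup>+g. indicator Z g + ennreal (?q g) \<partial>?G)"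
    by (meson less_imp_le order_trans)
  also have "\<dots> = emeasure ?G Z + (\<integral>\<^sup>+g. ennreal (?q g) \<partial>?G)"
    using Z measurable_pseudo_mean_form by (subst nn_integral_add) auto
  also have "(\<integral>\<^sup>+g. ennreal (?q g) \<partial>?G) = ennreal (4 * expected_form n x / (real n ^ 2 * r\<^sup>2))"
  proof (subst nn_integral_eq_integral)
    show "AE g in ?G. 0 \<le> ?q g"
      using AE_gamma_weights_pos by eventually_elim (simp add: pseudo_mean_form_nonneg[OF x] less_imp_le)
  qed (use integrable_pseudo_mean_form in \<open>auto simp: expected_form_def\<close>)
  finally show ?thesis
    using emeasure_gamma_weights_small_sum[OF n] by (simp add: Z_def add_right_mono order_trans)
qed

lemma gamma_weights_product_moment_bounds:
  assumes "i < n + T" "j < n + T"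
  shows "0 \<le> (\<integral>g. g i * g j \<partial>gamma_weights n)"
    "(\<integral>g. g i * g j \<partial>gamma_weights n) \<le> (1 + \<alpha> / real T) * (2 + \<alpha> / real T)"
proof -
  let ?a = "posterior_concentration \<alpha> T n"
  have a: "0 < ?a l" "?a l \<le> 1 + \<alpha> / real T" for l
    by (rule posterior_concentration_pos posterior_concentration_le)+
  show "0 \<le> (\<integral>g. g i * g j \<partial>gamma_weights n)"
    using a[of i] a[of j] by (simp add: gamma_weights_product_moment(2)[OF assms])
  have "?a i * (?a i + 1) \<le> (1 + \<alpha> / real T) * (2 + \<alpha> / real T)"
    using a[of i] by (intro mult_mono) auto
  moreover have "?a i * ?a j \<le> (1 + \<alpha> / real T) * (2 + \<alpha> / real T)"
    using a[of i] a[of j] by (intro mult_mono) auto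
  ultimately show "(\<integral>g. g i * g j \<partial>gamma_weights n) \<le> (1 + \<alpha> / real T) * (2 + \<alpha> / real T)"
    using gamma_weights_product_moment(2)[OF assms] by (cases "i = j") simp_all
qed

lemma measurable_centered_pair_mean:
  assumes "i < n + T" "j < n + T"
  shows "(\<lambda>x. centered_pair_mean n x i j) \<in> borel_measurable (data_space n)"
proof -
  interpret pseudo: prob_space pseudo_space by (rule prob_space_pseudo_space)
  show ?thesis
    unfolding centered_pair_mean_def
    using measurable_centered_kernel_augmented[OF assms] by (rule pseudo.borel_measurable_lebesgue_integral)
qed

lemma abs_centered_pair_mean_le:
  assumes "x \<in> space (data_space n)" "i < n + T" "j < n + T"
  shows "\<bar>centered_pair_mean n x i j\<bar> \<le> 4"
proof -
  interpret pseudo: prob_space pseudo_space by (rule prob_space_pseudo_space)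
  show ?thesis
    unfolding centered_pair_mean_def using assms
    by (intro pseudo.abs_integral_le_const measurable_centered_kernel_pseudo abs_centered_kernel_le P0_prob
        augmented_sample_in_space) auto
qed

text \<open>Two distinct observations are independent, and the centred kernel has mean zero in
  each argument.\<close>
lemma integral_centered_pair_mean_data:
  assumes "i < n" "j < n" "i \<noteq> j"
  shows "(\<integral>x. centered_pair_mean n x i j \<partial>data_space n) = 0"
proof -
  interpret pseudo: prob_space pseudo_space by (rule prob_space_pseudo_space)
  interpret data: product_prob_space "\<lambda>_. P0" "{..<n}"
    using P0_prob by (intro product_prob_spaceI) (simp add: space_prob_algebra)
  have space_P0: "space P0 = space M" using sets_eq_imp_space_eq[OF sets_P0] .
  have "(\<integral>x. centered_pair_mean n x i j \<partial>data_space n) = (\<integral>x. centered_kernel k P0 (x i) (x j) \<partial>data_space n)"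
    unfolding centered_pair_mean_def augmented_sample_def using assms by (simp add: pseudo.prob_space)
  also have "\<dots> = (\<integral>x. \<integral>y. centered_kernel k P0 x y \<partial>P0 \<partial>P0)"
    using assms abs_centered_kernel_le[OF P0_prob] measurable_centered_kernel[OF P0_prob]
    by (intro data.integral_PiM_pair_components[where B=4])
      (auto simp: space_P0 measurable_cong_sets[OF sets_pair_measure_cong[OF sets_P0 sets_P0] refl])
  also have "\<dots> = (\<integral>x. 0 \<partial>P0)"
    by (intro Bochner_Integration.integral_cong refl integral_centered_kernel_right[OF P0_prob])
      (simp add: space_P0)
  finally show ?thesis by simp
qed

lemma expected_form_nonneg:
  assumes "x \<in> space (data_space n)"
  shows "0 \<le> expected_form n x"
  unfolding expected_form_def using AE_gamma_weights_pos[of n]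
  by (intro integral_nonneg_AE, eventually_elim) (use assms in \<open>auto intro!: pseudo_mean_form_nonneg simp: less_imp_le\<close>)

lemma expected_form_integrable: "integrable (data_space n) (expected_form n)"
proof -
  interpret data: prob_space "data_space n" by (rule prob_space_data_space)
  show ?thesis
    unfolding expected_form_eq[abs_def] using measurable_centered_pair_mean abs_centered_pair_mean_le
    by (intro integrable_double_sum integrable_mult_right data.integrable_const_bound[where B=4]) auto
qed

lemma expected_pair_term_le:
  assumes ij: "i < n + T" "j < n + T"
  shows "(\<integral>g. g i * g j \<partial>gamma_weights n) * (\<integral>x. centered_pair_mean n x i j \<partial>data_space n)
    \<le> 4 * ((1 + \<alpha> / real T) * (2 + \<alpha> / real T)) * (if i < n \<and> j < n \<and> i \<noteq> j then 0 else 1)"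
proof (cases "i < n \<and> j < n \<and> i \<noteq> j")
  case True
  then show ?thesis by (simp add: integral_centered_pair_mean_data)
next
  case False
  interpret data: prob_space "data_space n" by (rule prob_space_data_space)
  let ?m = "\<integral>g. g i * g j \<partial>gamma_weights n"
  have "\<bar>\<integral>x. centered_pair_mean n x i j \<partial>data_space n\<bar> \<le> 4"
    using ij by (intro data.abs_integral_le_const measurable_centered_pair_mean abs_centered_pair_mean_le) auto
  then have "?m * (\<integral>x. centered_pair_mean n x i j \<partial>data_space n) \<le> ?m * 4"
    using gamma_weights_product_moment_bounds(1)[OF ij] by (intro mult_left_mono) auto
  also have "\<dots> \<le> 4 * ((1 + \<alpha> / real T) * (2 + \<alpha> / real T))"
    using gamma_weights_product_moment_bounds(2)[OF ij] by simp
  finally show ?thesis using False by auto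
qed

lemma integral_expected_form_le:
  "(\<integral>x. expected_form n x \<partial>data_space n)
    \<le> 4 * (1 + \<alpha> / real T) * (2 + \<alpha> / real T) * (real (n + T) * (1 + 2 * real T))"
proof -
  interpret data: prob_space "data_space n" by (rule prob_space_data_space)
  let ?K = "4 * ((1 + \<alpha> / real T) * (2 + \<alpha> / real T))"
  have "(\<integral>x. expected_form n x \<partial>data_space n)
      = (\<Sum>i<n + T. \<Sum>j<n + T.
           (\<integral>g. g i * g j \<partial>gamma_weights n) * (\<integral>x. centered_pair_mean n x i j \<partial>data_space n))"
    unfolding expected_form_eq using measurable_centered_pair_mean abs_centered_pair_mean_le
    by (subst integral_double_sum) (auto intro!: integrable_mult_right data.integrable_const_bound[where B=4])
  also have "\<dots> \<le> (\<Sum>i<n + T. \<Sum>j<n + T. ?K * (if i < n \<and> j < n \<and> i \<noteq> j then 0 else 1))"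
    by (intro sum_mono expected_pair_term_le) auto
  also have "\<dots> = ?K * (\<Sum>i<n + T. \<Sum>j<n + T. if i < n \<and> j < n \<and> i \<noteq> j then 0 else 1 :: real)"
    by (simp add: sum_distrib_left)
  also have "\<dots> \<le> ?K * (real (n + T) * (1 + 2 * real T))"
    using alpha_pos by (intro mult_left_mono card_pairs_not_both_data) auto
  finally show ?thesis by (simp only: mult.assoc)
qed

lemma expected_approx_posterior_far_le:
  assumes far: "A \<subseteq> {Q \<in> space (prob_algebra M). r < mmd k P0 Q}" and n: "0 < n" and r: "0 < r"
  shows "(\<integral>x. measure (approx_posterior M F \<alpha> T n x) A \<partial>data_space n)
    \<le> 4 / real n + 16 * (1 + \<alpha> / real T) * (2 + \<alpha> / real T) * (real (n + T) * (1 + 2 * real T))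
                      / (real n ^ 2 * r\<^sup>2)"
proof -
  interpret data: prob_space "data_space n" by (rule prob_space_data_space)
  define c where "c = 4 / (real n ^ 2 * r\<^sup>2)"
  define B where "B = 4 * (1 + \<alpha> / real T) * (2 + \<alpha> / real T) * (real (n + T) * (1 + 2 * real T))"
  have c: "0 < c" using n r by (simp add: c_def)
  have B: "0 \<le> B" using alpha_pos by (simp add: B_def)
  have "(\<integral>\<^sup>+x. ennreal (measure (approx_posterior M F \<alpha> T n x) A) \<partial>data_space n)
      \<le> (\<integral>\<^sup>+x. ennreal (4 / real n) + ennreal (c * expected_form n x) \<partial>data_space n)"
  proof (rule nn_integral_mono)
    fix x assume "x \<in> space (data_space n)"
    then show "ennreal (measure (approx_posterior M F \<alpha> T n x) A)
        \<le> ennreal (4 / real n) + ennreal (c * expected_form n x)"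
      using order_trans[OF ennreal_measure_le_emeasure emeasure_approx_posterior_far_le[OF _ far n r]]
      by (simp add: c_def)
  qed
  also have "\<dots> = ennreal (4 / real n) + ennreal (c * (\<integral>x. expected_form n x \<partial>data_space n))"
    using expected_form_integrable expected_form_nonneg c
    by (subst nn_integral_add, simp_all add: data.emeasure_space_1)
      (subst nn_integral_eq_integral, auto)
  also have "\<dots> = ennreal (4 / real n + c * (\<integral>x. expected_form n x \<partial>data_space n))"
    using c expected_form_nonneg by (subst ennreal_plus) (auto intro!: integral_nonneg_AE AE_I2)
  also have "\<dots> \<le> ennreal (4 / real n + c * B)"
    using integral_expected_form_le[of n] c unfolding B_def by (intro ennreal_leI add_left_mono mult_left_mono) auto
  finally have "enn2real (\<integral>\<^sup>+x. ennreal (measure (approx_posterior M F \<alpha> T n x) A) \<partial>data_space n)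
      \<le> 4 / real n + c * B"
    using c B n by (intro enn2real_leI) auto
  moreover have "c * B = 16 * (1 + \<alpha> / real T) * (2 + \<alpha> / real T) * (real (n + T) * (1 + 2 * real T))
                      / (real n ^ 2 * r\<^sup>2)"
    unfolding c_def B_def by simp
  ultimately show ?thesis
    using integral_le_enn2real_nn_integral[of "\<lambda>x. measure (approx_posterior M F \<alpha> T n x) A" "data_space n"]
    by simp
qed

lemma expected_approx_posterior_far_rate_le:
  assumes far: "A \<subseteq> {Q \<in> space (prob_algebra M). t / (2 * sqrt (real n)) < mmd k P0 Q}"
    and n: "0 < n" and t: "0 < t"
  shows "(\<integral>x. measure (approx_posterior M F \<alpha> T n x) A \<partial>data_space n)
    \<le> 4 / real n + 64 * (1 + \<alpha> / real T) * (2 + \<alpha> / real T) * (1 + real T) * (1 + 2 * real T) / t\<^sup>2"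
proof -
  define K where "K = 16 * (1 + \<alpha> / real T) * (2 + \<alpha> / real T) * (1 + 2 * real T)"
  have K: "0 \<le> K" using alpha_pos by (simp add: K_def)
  have "(\<integral>x. measure (approx_posterior M F \<alpha> T n x) A \<partial>data_space n)
      \<le> 4 / real n + K * real (n + T) / (real n ^ 2 * (t / (2 * sqrt (real n)))\<^sup>2)"
    using expected_approx_posterior_far_le[OF far n] n t by (simp add: K_def mult_ac)
  also have "(t / (2 * sqrt (real n)))\<^sup>2 = t\<^sup>2 / (4 * real n)"
    by (simp add: power_divide power_mult_distrib)
  also have "K * real (n + T) / (real n ^ 2 * (t\<^sup>2 / (4 * real n))) = 4 * K * (real (n + T) / real n) / t\<^sup>2"
    using n t by (simp add: power2_eq_square field_simps)
  also have "\<dots> \<le> 4 * K * (1 + real T) / t\<^sup>2"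
  proof -
    have "real T * 1 \<le> real T * real n" using n by (intro mult_left_mono) auto
    then have "real (n + T) \<le> (1 + real T) * real n" by (simp add: algebra_simps)
    then have "real (n + T) / real n \<le> 1 + real T" using n by (simp add: divide_le_eq)
    then show ?thesis using K t by (intro divide_right_mono mult_left_mono) auto
  qed
  also have "\<dots> = 64 * (1 + \<alpha> / real T) * (2 + \<alpha> / real T) * (1 + real T) * (1 + 2 * real T) / t\<^sup>2"
    by (simp add: K_def)
  finally show ?thesis by simp
qed

end

theorem corollary4:
  fixes M :: "'a measure"
    and k :: "'a \<Rightarrow> 'a \<Rightarrow> real"
    and Theta :: "'b set"
    and Pth :: "'b \<Rightarrow> 'a measure"
    and P0 F :: "'a measure"
    and thstar :: "'a measure \<Rightarrow> 'b"
    and \<alpha> :: real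
    and T :: nat
    and Mn :: "nat \<Rightarrow> real"
  assumes kernel: "pd_kernel M k"
    and k_meas: "(\<lambda>(x, y). k x y) \<in> borel_measurable (M \<Otimes>\<^sub>M M)"
    and k_bdd: "\<forall>x\<in>space M. \<forall>y\<in>space M. \<bar>k x y\<bar> \<le> 1"
    and model: "\<forall>\<theta>\<in>Theta. prob_space (Pth \<theta>) \<and> sets (Pth \<theta>) = sets M"
    and P0: "prob_space P0" "sets P0 = sets M"
    and well_spec: "(INF \<theta>\<in>Theta. mmd k (Pth \<theta>) P0) = 0"
    and thstar_min: "\<forall>Q\<in>space (prob_algebra M). thstar Q \<in> Theta \<and>
                        (\<forall>\<theta>\<in>Theta. (mmd k Q (Pth (thstar Q)))\<^sup>2 \<le> (mmd k Q (Pth \<theta>))\<^sup>2)"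
    and thstar_meas: "(\<lambda>Q. mmd k P0 (Pth (thstar Q))) \<in> borel_measurable (prob_algebra M)"
    and alpha: "\<alpha> > 0"
    and T: "T \<ge> 1"
    and F: "prob_space F" "sets F = sets M"
    and Mn_pos: "\<forall>n. Mn n > 0"
    and Mn_inf: "filterlim Mn at_top sequentially"
    and Mn_rate: "(\<lambda>n. Mn n / sqrt (real n)) \<longlonglongrightarrow> 0"
  shows "(\<lambda>n. \<integral>x. measure (approx_posterior M F \<alpha> T n x)
                 {Q \<in> space (prob_algebra M). mmd k P0 (Pth (thstar Q)) > Mn n / sqrt (real n)}
               \<partial>(PiM {..<n} (\<lambda>_. P0))) \<longlonglongrightarrow> 0"
proof -
  interpret mmd_posterior M k P0 F \<alpha> T
    using kernel k_meas k_bdd P0 F alpha T by unfold_locales (auto simp: space_prob_algebra)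
  define C where "C = 64 * (1 + \<alpha> / real T) * (2 + \<alpha> / real T) * (1 + real T) * (1 + 2 * real T)"
  let ?far = "\<lambda>n. {Q \<in> space (prob_algebra M). mmd k P0 (Pth (thstar Q)) > Mn n / sqrt (real n)}"
  let ?I = "\<lambda>n. \<integral>x. measure (approx_posterior M F \<alpha> T n x) (?far n) \<partial>PiM {..<n} (\<lambda>_. P0)"
  have "\<forall>\<theta>\<in>Theta. Pth \<theta> \<in> space (prob_algebra M)" using model by (simp add: space_prob_algebra)
  then have "?far n \<subseteq> {Q \<in> space (prob_algebra M). Mn n / sqrt (real n) / 2 < mmd k P0 Q}" for n
    by (rule minimiser_far_subset[OF P0_prob _ well_spec thstar_min])
  then have upper: "?I n \<le> 4 / real n + C * (inverse (Mn n))\<^sup>2" if "0 < n" for n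
    using expected_approx_posterior_far_rate_le[of "?far n" "Mn n" n] that Mn_pos
    by (simp add: C_def inverse_eq_divide power_divide mult.commute)
  have "(\<lambda>n. 4 / real n + C * (inverse (Mn n))\<^sup>2) \<longlonglongrightarrow> 0 + C * 0\<^sup>2"
    by (intro tendsto_add lim_const_over_n tendsto_mult tendsto_const tendsto_power
        tendsto_inverse_0_at_top Mn_inf)
  then have bound_to_zero: "(\<lambda>n. 4 / real n + C * (inverse (Mn n))\<^sup>2) \<longlonglongrightarrow> 0" by simp
  show ?thesis
  proof (rule tendsto_sandwich[OF _ _ tendsto_const bound_to_zero])
    show "\<forall>\<^sub>F n in sequentially. 0 \<le> ?I n"
      by (intro always_eventually allI integral_nonneg_AE AE_I2 measure_nonneg)
    show "\<forall>\<^sub>F n in sequentially. ?I n \<le> 4 / real n + C * (inverse (Mn n))\<^sup>2"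
      using upper by (intro eventually_sequentiallyI[of 1]) auto
  qed
qed

end
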